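(* Let $(E,(O_n)_{n\in\mathbb{N}},\ll)$ be an effective approximation space. Then, with all effective classes taken relative to the enumeration $(O_n)_{n\in\mathbb{N}}$, $F_\sigma(E)\cap G_\delta(E)\subseteq\bigcup_{\alpha<\omega_1^{CK}}\mathrm{D}_\alpha(E)\subseteq\Delta^0_2(E)$. In particular, if $F_\sigma(E)\cap G_\delta(E)=\Delta^0_2(E)$ then $\bigcup_{\alpha<\omega_1^{CK}}\mathrm{D}_\alpha(E)=\Delta^0_2(E)$.
   Context: Approximation relation: a binary relation $\ll$ on a topological basis $\mathcal{B}$ of $E$ such that for all $U,V,T\in\mathcal{B}$: (1) $U\ll V\Rightarrow V\subseteq U$; (2) $U\subseteq T$ and $U\ll V$ imply $T\ll V$; (3) for every $x\in U$ there is $W\in\mathcal{B}$ with $x\in W$, $U\ll W$; (4) every sequence $(U_i)$ in $\mathcal{B}$ with $U_i\ll U_{i+1}$ for all $i$ has $\bigcap_iU_i\neq\emptyset$. An effective approximation space is a triple $(E,(O_n)_{n},\ll)$ where $(O_n)_{n\in\mathbb{N}}$ enumerates (not necessarily injectively) a topological basis $\mathcal{B}$ of $E$, $\ll$ is an approximation relation on $\mathcal{B}$, and $\{(i,j):O_i\ll O_j\}$ is computably enumerable. Effective classes relative to $(O_n)$: a sequence $(X_n)_{n}$ of subsets of $E$ is uniformly $\Sigma^0_1$ if there is a c.e. $W\subseteq\mathbb{N}^2$ with $X_n=\bigcup_{i:(n,i)\in W}O_i$. $G_\delta(E)$: sets $\bigcap_nX_n$ with $(X_n)$ uniformly $\Sigma^0_1$;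 $F_\sigma(E)$: complements of $G_\delta(E)$ sets. $\Sigma^0_2(E)$: sets $\bigcup_n(X_n\setminus Y_n)$ with $(X_n),(Y_n)$ uniformly $\Sigma^0_1$; $\Pi^0_2(E)$: complements; $\Delta^0_2(E)=\Sigma^0_2(E)\cap\Pi^0_2(E)$. $\omega_1^{CK}$: the least non-computable ordinal. Parity: ordinal $\lambda+n$ ($\lambda$ zero or limit, $n<\omega$) has the parity of $n$; $\beta\sim\alpha$ means same parity. For $1\le\alpha<\omega_1^{CK}$, $\mathrm{D}_\alpha(E)$ is the class of sets $X$ for which there are a computable well-order $\preceq$ of order type $\alpha$ on $\mathbb{N}$ or on a finite initial segment $N$ of $\mathbb{N}$, with isomorphism $\varphi$ onto $\alpha$ such that $\{n:\varphi(n)\not\sim\alpha\}$ is computable, and a uniformly $\Sigma^0_1$ sequence $(X_n)_{n\in N}$ with $X=\bigcup_{p:\varphi(p)\not\sim\alpha}\big(X_p\setminus\bigcup_{q:\varphi(q)<\varphi(p)}X_q\big)$. *)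

theory Defs
  imports "HOL-Analysis.Analysis" "HOL-Library.Nat_Bijection"
begin

text \<open>Values on lists of other lengths are irrelevant.\<close>

inductive recfn :: "nat \<Rightarrow> (nat list \<Rightarrow> nat) \<Rightarrow> bool" where
  rf_zero: "recfn n (\<lambda>_. 0)"
| rf_succ: "recfn 1 (\<lambda>xs. Suc (hd xs))"
| rf_proj: "k < n \<Longrightarrow> recfn n (\<lambda>xs. xs ! k)"
| rf_comp: "recfn m f \<Longrightarrow> length gs = m \<Longrightarrow> (\<forall>g\<in>set gs. recfn n g) \<Longrightarrow>
            recfn n (\<lambda>xs. f (map (\<lambda>g. g xs) gs))"
| rf_prim: "recfn n f \<Longrightarrow> recfn (Suc (Suc n)) g \<Longrightarrow>
            recfn (Suc n) (\<lambda>xs. rec_nat (f (tl xs)) (\<lambda>y r. g (y # r # tl xs)) (hd xs))"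
| rf_mu: "recfn (Suc n) g \<Longrightarrow> (\<forall>xs. length xs = n \<longrightarrow> (\<exists>y. g (y # xs) = 0)) \<Longrightarrow>
          recfn n (\<lambda>xs. LEAST y. g (y # xs) = 0)"

definition computable_set :: "nat set \<Rightarrow> bool" where
  "computable_set A \<longleftrightarrow> (\<exists>f. recfn 1 f \<and> (\<forall>x. f [x] = (if x \<in> A then 1 else 0)))"

definition ce_set :: "nat set \<Rightarrow> bool" where
  "ce_set A \<longleftrightarrow> A = {} \<or> (\<exists>f. recfn 1 f \<and> A = range (\<lambda>x. f [x]))"

definition ce_rel :: "(nat \<times> nat) set \<Rightarrow> bool" where
  "ce_rel W \<longleftrightarrow> ce_set (prod_encode ` W)"

definition computable_rel :: "(nat \<times> nat) set \<Rightarrow> bool" where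
  "computable_rel W \<longleftrightarrow> computable_set (prod_encode ` W)"

definition approximation_relation ::
  "'a::topological_space set set \<Rightarrow> ('a set \<Rightarrow> 'a set \<Rightarrow> bool) \<Rightarrow> bool" where
  "approximation_relation B ll \<longleftrightarrow>
     (\<forall>U\<in>B. \<forall>V\<in>B. ll U V \<longrightarrow> V \<subseteq> U) \<and>
     (\<forall>U\<in>B. \<forall>V\<in>B. \<forall>T\<in>B. U \<subseteq> T \<and> ll U V \<longrightarrow> ll T V) \<and>
     (\<forall>U\<in>B. \<forall>x\<in>U. \<exists>W\<in>B. x \<in> W \<and> ll U W) \<and>
     (\<forall>S::nat \<Rightarrow> 'a set. (\<forall>i. S i \<in> B) \<and> (\<forall>i. ll (S i) (S (Suc i))) \<longrightarrow> (\<Inter>i. S i) \<noteq> {})"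

text \<open>The space E is the whole type 'a.\<close>
definition effective_approximation_space ::
  "(nat \<Rightarrow> 'a::topological_space set) \<Rightarrow> ('a set \<Rightarrow> 'a set \<Rightarrow> bool) \<Rightarrow> bool" where
  "effective_approximation_space Ob ll \<longleftrightarrow>
     topological_basis (range Ob) \<and>
     approximation_relation (range Ob) ll \<and>
     ce_rel {(i, j). ll (Ob i) (Ob j)}"

definition unif_Sigma01 :: "(nat \<Rightarrow> 'a set) \<Rightarrow> (nat \<Rightarrow> 'a set) \<Rightarrow> bool" where
  "unif_Sigma01 Ob X \<longleftrightarrow> (\<exists>W. ce_rel W \<and> (\<forall>n. X n = (\<Union>i\<in>{i. (n, i) \<in> W}. Ob i)))"

definition Gdelta :: "(nat \<Rightarrow> 'a set) \<Rightarrow> 'a set set" where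
  "Gdelta Ob = {A. \<exists>X. unif_Sigma01 Ob X \<and> A = (\<Inter>n. X n)}"

definition Fsigma :: "(nat \<Rightarrow> 'a set) \<Rightarrow> 'a set set" where
  "Fsigma Ob = {A. - A \<in> Gdelta Ob}"

definition Sigma02 :: "(nat \<Rightarrow> 'a set) \<Rightarrow> 'a set set" where
  "Sigma02 Ob = {A. \<exists>X Y. unif_Sigma01 Ob X \<and> unif_Sigma01 Ob Y \<and> A = (\<Union>n. X n - Y n)}"

definition Pi02 :: "(nat \<Rightarrow> 'a set) \<Rightarrow> 'a set set" where
  "Pi02 Ob = {A. - A \<in> Sigma02 Ob}"

definition Delta02 :: "(nat \<Rightarrow> 'a set) \<Rightarrow> 'a set set" where
  "Delta02 Ob = Sigma02 Ob \<inter> Pi02 Ob"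

text \<open>Ordinals are represented by well-order relations (Main's BNF_Wellorder
  library); an element a of the well-order alpha stands for the ordinal of its
  strict initial segment.  Writing that ordinal as lambda + n (lambda zero or limit),
  n is the number of elements b \<le> a with [b,a] finite, minus one.\<close>
definition elem_finpart :: "'b rel \<Rightarrow> 'b \<Rightarrow> nat" where
  "elem_finpart r a = card {b. (b, a) \<in> r \<and> finite {x. (b, x) \<in> r \<and> (x, a) \<in> r}} - 1"

text \<open>Writing the order type of r as lambda + m (lambda zero or limit),
  m is the number of elements of Field r with a finite upper set.\<close>
definition type_finpart :: "'b rel \<Rightarrow> nat" where
  "type_finpart r = card {b \<in> Field r. finite {x. (b, x) \<in> r}}"

definition parity_differs :: "'b rel \<Rightarrow> 'b \<Rightarrow> bool" where
  "parity_differs alpha a \<longleftrightarrow> (even (elem_finpart alpha a) \<noteq> even (type_finpart alpha))"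

text \<open>alpha < omega_1^CK: alpha is the order type of a computable well-order
  on a subset of the naturals.\<close>
definition computable_ordinal :: "'b rel \<Rightarrow> bool" where
  "computable_ordinal alpha \<longleftrightarrow> Well_order alpha \<and>
     (\<exists>r :: nat rel. Well_order r \<and> computable_rel r \<and> (r, alpha) \<in> ordIso)"

definition Dalpha :: "(nat \<Rightarrow> 'a set) \<Rightarrow> 'b rel \<Rightarrow> 'a set set" where
  "Dalpha Ob alpha = {A. \<exists>(r :: nat rel) N phi X.
      (N = UNIV \<or> (\<exists>k. N = {..<k})) \<and>
      Well_order r \<and> Field r = N \<and> computable_rel r \<and>
      iso r alpha phi \<and>
      computable_set {n \<in> N. parity_differs alpha (phi n)} \<and>
      unif_Sigma01 Ob X \<and>
      A = (\<Union>p\<in>{p \<in> N. parity_differs alpha (phi p)}.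
             X p - (\<Union>q\<in>{q \<in> N. (phi q, phi p) \<in> alpha \<and> phi q \<noteq> phi p}. X q))}"

text \<open>The union of D_alpha over 1 \<le> alpha < omega_1^CK (ordinals represented by
  well-orders on the naturals, which suffices as all such ordinals are countable).\<close>
definition Dunion :: "(nat \<Rightarrow> 'a set) \<Rightarrow> 'a set set" where
  "Dunion Ob = (\<Union>alpha\<in>{alpha :: nat rel. computable_ordinal alpha \<and> Field alpha \<noteq> {}}.
                 Dalpha Ob alpha)"

end

theory Submission
  imports Defs
begin

text \<open>
  Second inclusion: a member of \<open>D\<^sub>\<alpha>(E)\<close> is a difference combination
  \<open>\<Union>p\<in>P. X p - (\<Union>q<p. X q)\<close> along a computable well-order.  It is \<open>\<Sigma>\<^sup>0\<^sub>2\<close> by definition, and a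
  point lies in it iff the least index of a set containing it is in \<open>P\<close>; so the complement
  is the set of uncovered points together with the combination over the remaining indices,
  again \<open>\<Sigma>\<^sup>0\<^sub>2\<close>.

  First inclusion: if \<open>A = \<Inter>n. U n\<close> and \<open>-A = \<Inter>n. V n\<close>, interleave the levels
  \<open>U 0, V 0, U 1, \<dots>\<close> and consider the decidable tree of sequences of basic sets
  \<open>B\<^sub>0 \<lless> B\<^sub>1 \<lless> \<dots>\<close> with \<open>B\<^sub>k\<close> inside level \<open>k\<close>.  Property (4) of the approximation relation makes
  the tree well-founded (a common point of a branch would lie in \<open>A\<close> and in \<open>-A\<close>), so its
  Kleene--Brouwer order is a computable well-order.  Doubling it, every node gets an active
  position of the parity of its length; the least active position whose set contains \<open>x\<close>
  belongs to a node of length equal to the first level missing \<open>x\<close>, which is odd iff \<open>x \<in> A\<close>.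
  Hence \<open>A\<close> is the difference combination over the odd positions.
\<close>

section \<open>Recursive functions and decidable predicates\<close>

text \<open>Working up to this agreement makes the closure properties easy to use.\<close>
definition recursive :: "nat \<Rightarrow> (nat list \<Rightarrow> nat) \<Rightarrow> bool" where
  "recursive n f \<longleftrightarrow> (\<exists>g. recfn n g \<and> (\<forall>xs. length xs = n \<longrightarrow> g xs = f xs))"

lemma recursive_cong: "recursive n f \<Longrightarrow> (\<And>xs. length xs = n \<Longrightarrow> f xs = g xs) \<Longrightarrow> recursive n g"
  unfolding recursive_def by metis

lemma recursive_recfn: "recfn n f \<Longrightarrow> recursive n f"
  unfolding recursive_def by blast

lemma recursive_zero: "recursive n (\<lambda>_. 0)"
  by (rule recursive_recfn) (rule rf_zero)

lemma recursive_proj: "k < n \<Longrightarrow> recursive n (\<lambda>xs. xs ! k)"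
  by (rule recursive_recfn) (rule rf_proj)

lemma recursive_comp:
  assumes F: "recursive m F" and len: "length gs = m" and gs: "\<forall>g\<in>set gs. recursive n g"
  shows "recursive n (\<lambda>xs. F (map (\<lambda>g. g xs) gs))"
proof -
  obtain F' where F': "recfn m F'" "\<forall>xs. length xs = m \<longrightarrow> F' xs = F xs"
    using F unfolding recursive_def by blast
  have "\<forall>g\<in>set gs. \<exists>g'. recfn n g' \<and> (\<forall>xs. length xs = n \<longrightarrow> g' xs = g xs)"
    using gs unfolding recursive_def by blast
  then obtain G where G: "\<forall>g\<in>set gs. recfn n (G g) \<and> (\<forall>xs. length xs = n \<longrightarrow> G g xs = g xs)"
    by metis
  have "recfn n (\<lambda>xs. F' (map (\<lambda>g. g xs) (map G gs)))"
    by (rule rf_comp[OF F'(1)]) (use len G in auto)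
  moreover have "\<forall>xs. length xs = n \<longrightarrow> F' (map (\<lambda>g. g xs) (map G gs)) = F (map (\<lambda>g. g xs) gs)"
  proof (intro allI impI)
    fix xs :: "nat list" assume l: "length xs = n"
    have mm: "map (\<lambda>g. g xs) (map G gs) = map (\<lambda>g. g xs) gs"
      unfolding map_map by (rule map_cong) (use G l in auto)
    then show "F' (map (\<lambda>g. g xs) (map G gs)) = F (map (\<lambda>g. g xs) gs)"
      using F'(2) len mm by (simp del: map_map)
  qed
  ultimately show ?thesis unfolding recursive_def by blast
qed

lemma recursive_comp_list:
  assumes F: "recursive m F" and G: "\<And>k. k < m \<Longrightarrow> recursive n (G k)"
  shows "recursive n (\<lambda>xs. F (map (\<lambda>k. G k xs) [0..<m]))"
proof -
  have "recursive n (\<lambda>xs. F (map (\<lambda>g. g xs) (map G [0..<m])))"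
    by (rule recursive_comp[OF F]) (use G in auto)
  then show ?thesis by (simp add: comp_def)
qed

lemma recursive_succ: "recursive n f \<Longrightarrow> recursive n (\<lambda>xs. Suc (f xs))"
proof -
  assume f: "recursive n f"
  have s: "recursive 1 (\<lambda>xs. Suc (hd xs))" by (rule recursive_recfn) (rule rf_succ)
  have "recursive n (\<lambda>xs. Suc (hd (map (\<lambda>g. g xs) [f])))"
    by (rule recursive_comp[OF s]) (use f in auto)
  then show ?thesis by simp
qed

lemma recursive_const: "recursive n (\<lambda>_. c)"
  by (induction c) (auto intro: recursive_zero recursive_succ)

lemma recursive_prim:
  assumes f: "recursive n f" and g: "recursive (Suc (Suc n)) g"
  shows "recursive (Suc n) (\<lambda>xs. rec_nat (f (tl xs)) (\<lambda>y r. g (y # r # tl xs)) (hd xs))"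
proof -
  obtain f' where f': "recfn n f'" "\<forall>xs. length xs = n \<longrightarrow> f' xs = f xs"
    using f unfolding recursive_def by blast
  obtain g' where g': "recfn (Suc (Suc n)) g'" "\<forall>xs. length xs = Suc (Suc n) \<longrightarrow> g' xs = g xs"
    using g unfolding recursive_def by blast
  have "recfn (Suc n) (\<lambda>xs. rec_nat (f' (tl xs)) (\<lambda>y r. g' (y # r # tl xs)) (hd xs))"
    by (rule rf_prim[OF f'(1) g'(1)])
  moreover have "rec_nat (f' (tl xs)) (\<lambda>y r. g' (y # r # tl xs)) k
        = rec_nat (f (tl xs)) (\<lambda>y r. g (y # r # tl xs)) k" if "length xs = Suc n" for xs k
    using that f'(2) g'(2) by (induction k) auto
  ultimately show ?thesis unfolding recursive_def by blast
qed

lemma recursive_comp_cons: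
  assumes H: "recursive (Suc n) H" and b: "recursive n b"
  shows "recursive n (\<lambda>xs. H (b xs # xs))"
proof -
  have "recursive n (\<lambda>xs. H (map (\<lambda>k. (\<lambda>k xs. if k = 0 then b xs else xs ! (k - 1)) k xs) [0..<Suc n]))"
    by (rule recursive_comp_list[OF H]) (case_tac "k = 0", simp add: b, simp, rule recursive_proj, simp)
  then show ?thesis
  proof (rule recursive_cong)
    fix xs :: "nat list" assume "length xs = n"
    then have "map (\<lambda>k. if k = 0 then b xs else xs ! (k - 1)) [0..<Suc n] = b xs # xs"
      by (simp add: map_upt_Suc del: upt_Suc) (metis map_nth)
    then show "H (map (\<lambda>k. (\<lambda>k xs. if k = 0 then b xs else xs ! (k - 1)) k xs) [0..<Suc n]) = H (b xs # xs)"
      by simp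
  qed
qed

lemma recursive_rec:
  assumes a: "recursive n a" and s: "recursive (Suc (Suc n)) s" and b: "recursive n b"
  shows "recursive n (\<lambda>xs. rec_nat (a xs) (\<lambda>y r. s (y # r # xs)) (b xs))"
proof -
  have "recursive n (\<lambda>xs. (\<lambda>ys. rec_nat (a (tl ys)) (\<lambda>y r. s (y # r # tl ys)) (hd ys)) (b xs # xs))"
    by (rule recursive_comp_cons[OF recursive_prim[OF a s] b])
  then show ?thesis by simp
qed

lemma recursive_lift:
  assumes f: "recursive n f"
  shows "recursive (m + n) (\<lambda>xs. f (drop m xs))"
proof -
  have "recursive (m + n) (\<lambda>xs. f (map (\<lambda>k. (\<lambda>k xs. xs ! (m + k)) k xs) [0..<n]))"
    by (rule recursive_comp_list[OF f]) (auto intro: recursive_proj)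
  then show ?thesis
  proof (rule recursive_cong)
    fix xs :: "nat list" assume "length xs = m + n"
    then have "map (\<lambda>k. xs ! (m + k)) [0..<n] = drop m xs"
      by (intro nth_equalityI) auto
    then show "f (map (\<lambda>k. (\<lambda>k xs. xs ! (m + k)) k xs) [0..<n]) = f (drop m xs)" by simp
  qed
qed

lemma recursive_drop2: "recursive n f \<Longrightarrow> recursive (Suc (Suc n)) (\<lambda>xs. f (drop 2 xs))"
  using recursive_lift[of n f 2] by simp

lemma rec_nat_Suc_add: "rec_nat a (\<lambda>y r. Suc r) k = k + a"
  by (induction k) auto

lemma recursive_add: "recursive n f \<Longrightarrow> recursive n g \<Longrightarrow> recursive n (\<lambda>xs. f xs + g xs)"
proof -
  assume f: "recursive n f" and g: "recursive n g"
  have "recursive n (\<lambda>xs. rec_nat (g xs) (\<lambda>y r. (\<lambda>zs. Suc (zs ! 1)) (y # r # xs)) (f xs))"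
    by (rule recursive_rec[OF g _ f]) (auto intro: recursive_succ recursive_proj)
  then show ?thesis by (rule recursive_cong) (simp add: rec_nat_Suc_add)
qed

lemma recursive_comp1:
  assumes F: "recursive 1 F" and a: "recursive n a"
  shows "recursive n (\<lambda>xs. F [a xs])"
proof -
  have "recursive n (\<lambda>xs. F (map (\<lambda>g. g xs) [a]))"
    by (rule recursive_comp[OF F]) (use a in auto)
  then show ?thesis by simp
qed

lemma recursive_comp2:
  assumes F: "recursive 2 F" and a: "recursive n a" and b: "recursive n b"
  shows "recursive n (\<lambda>xs. F [a xs, b xs])"
proof -
  have "recursive n (\<lambda>xs. F (map (\<lambda>g. g xs) [a, b]))"
    by (rule recursive_comp[OF F]) (use a b in auto)
  then show ?thesis by simp
qed

lemma recursive_comp3: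
  assumes F: "recursive 3 F" and a: "recursive n a" and b: "recursive n b" and c: "recursive n c"
  shows "recursive n (\<lambda>xs. F [a xs, b xs, c xs])"
proof -
  have "recursive n (\<lambda>xs. F (map (\<lambda>g. g xs) [a, b, c]))"
    by (rule recursive_comp[OF F]) (use a b c in auto)
  then show ?thesis by simp
qed

lemma recursive_unary:
  assumes "recursive 1 (\<lambda>xs. h (xs ! 0))" and "recursive n a"
  shows "recursive n (\<lambda>xs. h (a xs))"
  using recursive_comp1[OF assms] by simp

lemma recursive_pred: "recursive n f \<Longrightarrow> recursive n (\<lambda>xs. f xs - 1)"
proof -
  assume f: "recursive n f"
  have "recursive n (\<lambda>xs. rec_nat 0 (\<lambda>y r. (\<lambda>zs. zs ! 0) (y # r # xs)) (f xs))"
    by (rule recursive_rec[OF recursive_const _ f]) (auto intro: recursive_proj)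
  moreover have "rec_nat 0 (\<lambda>y r. y) k = k - 1" for k by (cases k) auto
  ultimately show ?thesis by (auto elim: recursive_cong)
qed

lemma rec_nat_pred: "rec_nat a (\<lambda>y r. r - Suc 0) k = a - k"
  by (induction k) auto

lemma recursive_sub: "recursive n f \<Longrightarrow> recursive n g \<Longrightarrow> recursive n (\<lambda>xs. f xs - g xs)"
proof -
  assume f: "recursive n f" and g: "recursive n g"
  have "recursive n (\<lambda>xs. rec_nat (f xs) (\<lambda>y r. (\<lambda>zs. zs ! 1 - 1) (y # r # xs)) (g xs))"
    by (rule recursive_rec[OF f _ g]) (intro recursive_proj recursive_pred; simp)
  then show ?thesis by (rule recursive_cong) (simp add: rec_nat_pred)
qed

lemma rec_nat_mult: "rec_nat 0 (\<lambda>y r. r + c) k = k * c"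
  by (induction k) auto

lemma recursive_mult: "recursive n f \<Longrightarrow> recursive n g \<Longrightarrow> recursive n (\<lambda>xs. f xs * g xs)"
proof -
  assume f: "recursive n f" and g: "recursive n g"
  have "recursive n (\<lambda>xs. rec_nat 0 (\<lambda>y r. (\<lambda>zs. zs ! 1 + g (drop 2 zs)) (y # r # xs)) (f xs))"
    by (rule recursive_rec[OF recursive_const _ f]) (intro recursive_proj recursive_add recursive_drop2 g; simp)
  then show ?thesis by (rule recursive_cong) (simp add: rec_nat_mult)
qed

lemma rec_nat_if0: "rec_nat a (\<lambda>y r. b) k = (if k = 0 then a else b)"
  by (cases k) auto

lemma recursive_if0: "recursive n c \<Longrightarrow> recursive n a \<Longrightarrow> recursive n b \<Longrightarrow> recursive n (\<lambda>xs. if c xs = 0 then a xs else b xs)"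
proof -
  assume c: "recursive n c" and a: "recursive n a" and b: "recursive n b"
  have "recursive n (\<lambda>xs. rec_nat (a xs) (\<lambda>y r. (\<lambda>zs. b (drop 2 zs)) (y # r # xs)) (c xs))"
    by (rule recursive_rec[OF a _ c]) (auto intro: recursive_drop2 b)
  then show ?thesis by (rule recursive_cong) (simp add: rec_nat_if0)
qed

lemma recursive_drop_second: "recursive (Suc n) Q \<Longrightarrow> recursive (Suc (Suc n)) (\<lambda>zs. Q (zs ! 0 # drop 2 zs))"
proof -
  assume Q: "recursive (Suc n) Q"
  have "recursive (Suc (Suc n)) (\<lambda>zs. Q (map (\<lambda>k. (\<lambda>k zs. if k = 0 then zs ! 0 else zs ! Suc k) k zs) [0..<Suc n]))"
    by (rule recursive_comp_list[OF Q]) (case_tac "k = 0", simp, rule recursive_proj, simp, simp, rule recursive_proj, simp)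
  then show ?thesis
  proof (rule recursive_cong)
    fix zs :: "nat list" assume l: "length zs = Suc (Suc n)"
    have "map (\<lambda>k. if k = 0 then zs ! 0 else zs ! Suc k) [0..<Suc n] = zs ! 0 # drop 2 zs"
      using l by (intro nth_equalityI) (auto simp: nth_Cons' simp del: upt_Suc)
    then show "Q (map (\<lambda>k. (\<lambda>k zs. if k = 0 then zs ! 0 else zs ! Suc k) k zs) [0..<Suc n]) = Q (zs ! 0 # drop 2 zs)"
      by simp
  qed
qed

lemma rec_nat_sum: "rec_nat 0 (\<lambda>y r. r + f y) k = (\<Sum>i<k. f i)"
  by (induction k) auto

lemma recursive_sum: "recursive (Suc n) Q \<Longrightarrow> recursive n b \<Longrightarrow> recursive n (\<lambda>xs. \<Sum>i<b xs. Q (i # xs))"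
proof -
  assume Q: "recursive (Suc n) Q" and b: "recursive n b"
  have "recursive n (\<lambda>xs. rec_nat 0 (\<lambda>y r. (\<lambda>zs. zs ! 1 + Q (zs ! 0 # drop 2 zs)) (y # r # xs)) (b xs))"
    by (rule recursive_rec[OF recursive_const _ b]) (intro recursive_add recursive_proj recursive_drop_second Q; simp)
  then show ?thesis by (rule recursive_cong) (simp add: rec_nat_sum)
qed

definition decidable :: "nat \<Rightarrow> (nat list \<Rightarrow> bool) \<Rightarrow> bool" where
  "decidable n P \<longleftrightarrow> recursive n (\<lambda>xs. if P xs then 1 else 0)"

lemma decidable_cong: "decidable n P \<Longrightarrow> (\<And>xs. length xs = n \<Longrightarrow> P xs = Q xs) \<Longrightarrow> decidable n Q"
  unfolding decidable_def by (erule recursive_cong) simp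

lemma recursive_if: "decidable n P \<Longrightarrow> recursive n a \<Longrightarrow> recursive n b \<Longrightarrow> recursive n (\<lambda>xs. if P xs then a xs else b xs)"
  unfolding decidable_def by (drule recursive_if0[of n _ b a]) (auto elim: recursive_cong)

lemma decidable_eq: "recursive n f \<Longrightarrow> recursive n g \<Longrightarrow> decidable n (\<lambda>xs. f xs = g xs)"
  unfolding decidable_def
  by (rule recursive_cong[of n "\<lambda>xs. 1 - ((f xs - g xs) + (g xs - f xs))"]) (auto intro!: recursive_sub recursive_add recursive_const)

lemma decidable_less: "recursive n f \<Longrightarrow> recursive n g \<Longrightarrow> decidable n (\<lambda>xs. f xs < g xs)"
  unfolding decidable_def
  by (rule recursive_cong[of n "\<lambda>xs. 1 - (1 - (g xs - f xs))"]) (auto intro!: recursive_sub recursive_const)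

lemma decidable_not: "decidable n P \<Longrightarrow> decidable n (\<lambda>xs. \<not> P xs)"
  unfolding decidable_def
  by (rule recursive_cong[of n "\<lambda>xs. 1 - (if P xs then 1 else 0)"]) (auto intro!: recursive_sub recursive_const)

lemma decidable_conj: "decidable n P \<Longrightarrow> decidable n Q \<Longrightarrow> decidable n (\<lambda>xs. P xs \<and> Q xs)"
  unfolding decidable_def
  by (rule recursive_cong[of n "\<lambda>xs. (if P xs then 1 else 0) * (if Q xs then 1 else 0)"]) (auto intro!: recursive_mult)

lemma decidable_disj: "decidable n P \<Longrightarrow> decidable n Q \<Longrightarrow> decidable n (\<lambda>xs. P xs \<or> Q xs)"
  by (rule decidable_cong[OF decidable_not[OF decidable_conj[OF decidable_not decidable_not]]]) auto

lemma decidable_imp: "decidable n P \<Longrightarrow> decidable n Q \<Longrightarrow> decidable n (\<lambda>xs. P xs \<longrightarrow> Q xs)"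
  by (rule decidable_cong[OF decidable_disj[OF decidable_not]]) auto

lemma decidable_const: "decidable n (\<lambda>xs. c)"
  unfolding decidable_def by (cases c) (auto intro: recursive_const)

lemma decidable_ball: "decidable (Suc n) Q \<Longrightarrow> recursive n b \<Longrightarrow> decidable n (\<lambda>xs. \<forall>i<b xs. Q (i # xs))"
proof -
  assume Q: "decidable (Suc n) Q" and b: "recursive n b"
  have "recursive (Suc n) (\<lambda>ys. 1 - (if Q ys then 1 else 0))"
    using Q unfolding decidable_def by (auto intro!: recursive_sub recursive_const)
  from recursive_sum[OF this b] have S: "recursive n (\<lambda>xs. \<Sum>i<b xs. 1 - (if Q (i # xs) then 1 else 0))" .
  have "decidable n (\<lambda>xs. (\<Sum>i<b xs. 1 - (if Q (i # xs) then 1 else 0)) = (0::nat))"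
    using decidable_eq[OF S recursive_const[of n 0]] by (simp only:)
  then show ?thesis by (rule decidable_cong) auto
qed

lemma decidable_bex: "decidable (Suc n) Q \<Longrightarrow> recursive n b \<Longrightarrow> decidable n (\<lambda>xs. \<exists>i<b xs. Q (i # xs))"
  by (rule decidable_cong[OF decidable_not[OF decidable_ball[OF decidable_not]]]) auto

lemma rec_nat_tri: "rec_nat 0 (\<lambda>y r. Suc (r + y)) k = triangle k"
  by (induction k) auto

lemma recursive_triangle: "recursive n f \<Longrightarrow> recursive n (\<lambda>xs. triangle (f xs))"
proof -
  assume f: "recursive n f"
  have "recursive n (\<lambda>xs. rec_nat 0 (\<lambda>y r. (\<lambda>zs. zs ! 1 + Suc (zs ! 0)) (y # r # xs)) (f xs))"
    by (rule recursive_rec[OF recursive_const _ f]) (intro recursive_add recursive_succ recursive_proj; simp)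
  then show ?thesis by (rule recursive_cong) (simp add: rec_nat_tri)
qed

lemma recursive_prod_encode: "recursive n f \<Longrightarrow> recursive n g \<Longrightarrow> recursive n (\<lambda>xs. prod_encode (f xs, g xs))"
  unfolding prod_encode_def by (auto intro!: recursive_add recursive_triangle)

text \<open>\<dots> and so are its inverses, obtained by a bounded search over pairs.\<close>
lemma sum_prod_decode:
  "(\<Sum>a<Suc x. \<Sum>b<Suc x. if prod_encode (a, b) = x then h a b else 0) = (case prod_decode x of (a, b) \<Rightarrow> h a b)"
proof -
  obtain a0 b0 where d: "prod_decode x = (a0, b0)" by fastforce
  then have x: "x = prod_encode (a0, b0)" by (metis prod_decode_inverse)
  have a0: "a0 < Suc x" and b0: "b0 < Suc x" using x le_prod_encode_1 le_prod_encode_2 by (auto simp: less_Suc_eq_le)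
  have "(\<Sum>a<Suc x. \<Sum>b<Suc x. if prod_encode (a, b) = x then h a b else 0)
       = (\<Sum>a<Suc x. \<Sum>b<Suc x. if a = a0 then (if b = b0 then h a b else 0) else 0)"
    by (intro sum.cong refl) (auto simp: x)
  also have "\<dots> = (\<Sum>a<Suc x. if a = a0 then h a b0 else 0)"
    by (intro sum.cong refl) (use b0 in auto)
  also have "\<dots> = h a0 b0" using a0 by simp
  finally show ?thesis by (simp add: d)
qed

lemma recursive_prod_decode_case:
  assumes h: "recursive 3 (\<lambda>zs. h (zs ! 1) (zs ! 0))"
  shows "recursive 1 (\<lambda>xs. case prod_decode (xs ! 0) of (a, b) \<Rightarrow> h a b)"
proof -
  define Q where "Q = (\<lambda>zs::nat list. if prod_encode (zs ! Suc 0, zs ! 0) = zs ! 2 then h (zs ! Suc 0) (zs ! 0) else 0)"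
  have Q: "recursive (Suc (Suc (Suc 0))) Q" unfolding Q_def
    by (intro recursive_if decidable_eq recursive_prod_encode recursive_proj h[simplified numeral_3_eq_3 One_nat_def] recursive_const; simp)
  have Q2: "recursive (Suc (Suc 0)) (\<lambda>ys. \<Sum>i<Suc (ys ! 1). Q (i # ys))"
    by (rule recursive_sum[OF Q]) (intro recursive_succ recursive_proj; simp)
  have "recursive (Suc 0) (\<lambda>xs. \<Sum>i<Suc (xs ! 0). (\<lambda>ys. \<Sum>i<Suc (ys ! 1). Q (i # ys)) (i # xs))"
    by (rule recursive_sum[OF Q2]) (intro recursive_succ recursive_proj; simp)
  then have "recursive 1 (\<lambda>xs. \<Sum>i<Suc (xs ! 0). (\<lambda>ys. \<Sum>i<Suc (ys ! 1). Q (i # ys)) (i # xs))" by simp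
  then show ?thesis
  proof (rule recursive_cong)
    fix xs :: "nat list" assume "length xs = 1"
    show "(\<Sum>i<Suc (xs ! 0). (\<lambda>ys. \<Sum>i<Suc (ys ! 1). Q (i # ys)) (i # xs)) = (case prod_decode (xs ! 0) of (a, b) \<Rightarrow> h a b)"
      unfolding Q_def using sum_prod_decode[of "xs ! 0" h] by (simp del: sum.lessThan_Suc cong: if_cong)
  qed
qed

definition unpair_fst :: "nat \<Rightarrow> nat" where "unpair_fst x = fst (prod_decode x)"
definition unpair_snd :: "nat \<Rightarrow> nat" where "unpair_snd x = snd (prod_decode x)"

lemma unpair_fst_prod_encode[simp]: "unpair_fst (prod_encode (a, b)) = a" by (simp add: unpair_fst_def)
lemma unpair_snd_prod_encode[simp]: "unpair_snd (prod_encode (a, b)) = b" by (simp add: unpair_snd_def)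
lemma prod_encode_unpair[simp]: "prod_encode (unpair_fst x, unpair_snd x) = x" by (simp add: unpair_fst_def unpair_snd_def)

lemma recursive_unpair_fst: "recursive n f \<Longrightarrow> recursive n (\<lambda>xs. unpair_fst (f xs))"
proof -
  assume f: "recursive n f"
  have "recursive 1 (\<lambda>xs. case prod_decode (xs ! 0) of (a, b) \<Rightarrow> a)"
    by (rule recursive_prod_decode_case) (rule recursive_proj, simp)
  then have "recursive 1 (\<lambda>xs. unpair_fst (xs ! 0))" by (rule recursive_cong) (simp add: unpair_fst_def split: prod.split)
  from recursive_unary[OF this f] show ?thesis .
qed

lemma recursive_unpair_snd: "recursive n f \<Longrightarrow> recursive n (\<lambda>xs. unpair_snd (f xs))"
proof -
  assume f: "recursive n f"
  have "recursive 1 (\<lambda>xs. case prod_decode (xs ! 0) of (a, b) \<Rightarrow> b)"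
    by (rule recursive_prod_decode_case) (rule recursive_proj, simp)
  then have "recursive 1 (\<lambda>xs. unpair_snd (xs ! 0))" by (rule recursive_cong) (simp add: unpair_snd_def split: prod.split)
  from recursive_unary[OF this f] show ?thesis .
qed

lemma recursive_mod2: "recursive n f \<Longrightarrow> recursive n (\<lambda>xs. f xs mod 2)"
proof -
  assume f: "recursive n f"
  have "recursive n (\<lambda>xs. rec_nat 0 (\<lambda>y r. (\<lambda>zs. 1 - zs ! 1) (y # r # xs)) (f xs))"
    by (rule recursive_rec[OF recursive_const _ f]) (intro recursive_sub recursive_const recursive_proj; simp)
  moreover have "rec_nat 0 (\<lambda>y r. Suc 0 - r) k = k mod 2" for k :: nat
    by (induction k) (auto simp: mod_Suc)
  ultimately show ?thesis by (auto elim: recursive_cong)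
qed

lemma recursive_div2: "recursive n f \<Longrightarrow> recursive n (\<lambda>xs. f xs div 2)"
proof -
  assume f: "recursive n f"
  have "recursive n (\<lambda>xs. rec_nat 0 (\<lambda>y r. (\<lambda>zs. zs ! 1 + zs ! 0 mod 2) (y # r # xs)) (f xs))"
    by (rule recursive_rec[OF recursive_const _ f]) (intro recursive_add recursive_mod2 recursive_proj; simp)
  moreover have "rec_nat 0 (\<lambda>y r. r + y mod 2) k = k div 2" for k :: nat
    by (induction k) (auto simp: div_Suc mod_Suc)
  ultimately show ?thesis by (auto elim: recursive_cong)
qed

lemma recursive_iter:
  assumes h: "recursive 1 (\<lambda>xs. h (xs ! 0))" and a: "recursive n a" and k: "recursive n k"
  shows "recursive n (\<lambda>xs. (h ^^ k xs) (a xs))"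
proof -
  have "recursive n (\<lambda>xs. rec_nat (a xs) (\<lambda>y r. (\<lambda>zs. h (zs ! 1)) (y # r # xs)) (k xs))"
    by (rule recursive_rec[OF a _ k]) (rule recursive_unary[OF h], rule recursive_proj, simp)
  moreover have "rec_nat c (\<lambda>y r. h r) j = (h ^^ j) c" for c j
    by (induction j) auto
  ultimately show ?thesis by (auto elim: recursive_cong)
qed

lemma ce_rel_intro:
  assumes R: "decidable 3 (\<lambda>zs. R (zs ! 0) (zs ! 1) (zs ! 2))"
  shows "ce_rel {(a, b). \<exists>t. R t a b}"
proof (cases "{(a, b). \<exists>t. R t a b} = {}")
  case True then show ?thesis unfolding ce_rel_def ce_set_def by simp
next
  case False
  then obtain a0 b0 t0 where R0: "R t0 a0 b0" by auto
  define F where "F = (\<lambda>xs::nat list. if R (unpair_fst (xs ! 0)) (unpair_fst (unpair_snd (xs ! 0))) (unpair_snd (unpair_snd (xs ! 0)))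
      then prod_encode (unpair_fst (unpair_snd (xs ! 0)), unpair_snd (unpair_snd (xs ! 0))) else prod_encode (a0, b0))"
  have "decidable 1 (\<lambda>xs. (\<lambda>zs. R (zs ! 0) (zs ! 1) (zs ! 2)) [unpair_fst (xs ! 0), unpair_fst (unpair_snd (xs ! 0)), unpair_snd (unpair_snd (xs ! 0))])"
    unfolding decidable_def
    by (rule recursive_comp3[OF R[unfolded decidable_def]]) (intro recursive_unpair_fst recursive_unpair_snd recursive_proj; simp)+
  then have "decidable 1 (\<lambda>xs. R (unpair_fst (xs ! 0)) (unpair_fst (unpair_snd (xs ! 0))) (unpair_snd (unpair_snd (xs ! 0))))"
    by (simp add: numeral_2_eq_2)
  then have "recursive 1 F" unfolding F_def
    by (intro recursive_if recursive_prod_encode recursive_unpair_fst recursive_unpair_snd recursive_proj recursive_const; simp)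
  then obtain f where f: "recfn 1 f" "\<forall>xs. length xs = 1 \<longrightarrow> f xs = F xs"
    unfolding recursive_def by blast
  have "prod_encode ` {(a, b). \<exists>t. R t a b} = range (\<lambda>x. f [x])"
  proof safe
    fix a b t assume "R t a b"
    then have "f [prod_encode (t, prod_encode (a, b))] = prod_encode (a, b)"
      using f(2) by (simp add: F_def)
    then show "prod_encode (a, b) \<in> range (\<lambda>x. f [x])" by (metis rangeI)
  next
    fix x
    show "f [x] \<in> prod_encode ` {(a, b). \<exists>t. R t a b}"
    proof (cases "R (unpair_fst x) (unpair_fst (unpair_snd x)) (unpair_snd (unpair_snd x))")
      case True
      have "f [x] = prod_encode (unpair_fst (unpair_snd x), unpair_snd (unpair_snd x))"
        using f(2) True by (simp add: F_def del: prod_encode_unpair)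
      then show ?thesis using True by blast
    next
      case False
      then show ?thesis using f(2) R0 by (auto simp: F_def)
    qed
  qed
  then show ?thesis unfolding ce_rel_def ce_set_def using f(1) by blast
qed

lemma ce_rel_elim:
  assumes "ce_rel W"
  shows "\<exists>R. decidable 3 (\<lambda>zs. R (zs ! 0) (zs ! 1) (zs ! 2)) \<and> W = {(a, b). \<exists>t. R t a b}"
proof (cases "W = {}")
  case True
  then show ?thesis by (intro exI[of _ "\<lambda>_ _ _. False"]) (auto intro: decidable_const)
next
  case False
  then obtain f where f: "recfn 1 f" "prod_encode ` W = range (\<lambda>x. f [x])"
    using assms unfolding ce_rel_def ce_set_def by auto
  have "recursive 1 f" using f(1) by (rule recursive_recfn)
  have "decidable 3 (\<lambda>zs. f [zs ! 0] = prod_encode (zs ! 1, zs ! 2))"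
    by (intro decidable_eq recursive_comp1[OF \<open>recursive 1 f\<close>] recursive_prod_encode recursive_proj; simp)
  moreover have "W = {(a, b). \<exists>t. f [t] = prod_encode (a, b)}"
  proof safe
    fix a b assume "(a, b) \<in> W"
    then have "prod_encode (a, b) \<in> range (\<lambda>x. f [x])" using f(2) by blast
    then show "\<exists>t. f [t] = prod_encode (a, b)" by auto
  next
    fix a b t assume "f [t] = prod_encode (a, b)"
    then have "prod_encode (a, b) \<in> prod_encode ` W" using f(2) by (metis rangeI)
    then show "(a, b) \<in> W" by (auto simp: inj_on_eq_iff[OF inj_prod_encode])
  qed
  ultimately show ?thesis by (intro exI[of _ "\<lambda>t a b. f [t] = prod_encode (a, b)"]) simp
qed

lemma computable_set_intro:
  assumes "decidable 1 (\<lambda>zs. zs ! 0 \<in> S)"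
  shows "computable_set S"
proof -
  obtain f where "recfn 1 f" "\<forall>xs. length xs = 1 \<longrightarrow> f xs = (if xs ! 0 \<in> S then 1 else 0)"
    using assms unfolding decidable_def recursive_def by blast
  then show ?thesis unfolding computable_set_def by (intro exI[of _ f]) auto
qed

lemma computable_rel_intro:
  assumes "decidable 2 (\<lambda>zs. (zs ! 0, zs ! 1) \<in> r)"
  shows "computable_rel r"
proof -
  have "decidable 1 (\<lambda>xs. (\<lambda>zs. (zs ! 0, zs ! 1) \<in> r) [unpair_fst (xs ! 0), unpair_snd (xs ! 0)])"
    unfolding decidable_def by (rule recursive_comp2[OF assms[unfolded decidable_def]]) (intro recursive_unpair_fst recursive_unpair_snd recursive_proj; simp)+
  then have "decidable 1 (\<lambda>xs. xs ! 0 \<in> prod_encode ` r)"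
  proof (rule decidable_cong)
    fix xs :: "nat list"
    have "(xs ! 0 \<in> prod_encode ` r) \<longleftrightarrow> prod_encode (unpair_fst (xs ! 0), unpair_snd (xs ! 0)) \<in> prod_encode ` r" by simp
    also have "\<dots> \<longleftrightarrow> (unpair_fst (xs ! 0), unpair_snd (xs ! 0)) \<in> r" by (rule inj_image_mem_iff[OF inj_prod_encode])
    finally show "(\<lambda>zs. (zs ! 0, zs ! 1) \<in> r) [unpair_fst (xs ! 0), unpair_snd (xs ! 0)] = (xs ! 0 \<in> prod_encode ` r)" by simp
  qed
  then show ?thesis unfolding computable_rel_def by (rule computable_set_intro)
qed

lemma decidable_comp1: "decidable 1 (\<lambda>zs. R (zs ! 0)) \<Longrightarrow> recursive n a \<Longrightarrow> decidable n (\<lambda>xs. R (a xs))"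
  unfolding decidable_def using recursive_comp1[of "\<lambda>zs. if R (zs ! 0) then 1 else 0" n a] by simp

lemma decidable_comp2: "decidable 2 (\<lambda>zs. R (zs ! 0) (zs ! 1)) \<Longrightarrow> recursive n a \<Longrightarrow> recursive n b \<Longrightarrow> decidable n (\<lambda>xs. R (a xs) (b xs))"
  unfolding decidable_def using recursive_comp2[of "\<lambda>zs. if R (zs ! 0) (zs ! 1) then 1 else 0" n a b] by simp

lemma decidable_comp3: "decidable 3 (\<lambda>zs. R (zs ! 0) (zs ! 1) (zs ! 2)) \<Longrightarrow> recursive n a \<Longrightarrow> recursive n b \<Longrightarrow> recursive n c \<Longrightarrow> decidable n (\<lambda>xs. R (a xs) (b xs) (c xs))"
  unfolding decidable_def using recursive_comp3[of "\<lambda>zs. if R (zs ! 0) (zs ! 1) (zs ! 2) then 1 else 0" n a b c] by (simp add: numeral_2_eq_2)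

lemma decidable_computable_set: "computable_set S \<Longrightarrow> decidable 1 (\<lambda>zs. zs ! 0 \<in> S)"
  unfolding computable_set_def decidable_def
proof (elim exE conjE)
  fix f assume f: "recfn 1 f" "\<forall>x. f [x] = (if x \<in> S then 1 else 0)"
  show "recursive 1 (\<lambda>zs. if zs ! 0 \<in> S then 1 else 0)"
    by (rule recursive_cong[OF recursive_recfn[OF f(1)]]) (use f(2) in \<open>auto simp: length_Suc_conv\<close>)
qed

lemma decidable_computable_rel: "computable_rel r \<Longrightarrow> decidable 2 (\<lambda>zs. (zs ! 0, zs ! 1) \<in> r)"
proof -
  assume "computable_rel r"
  then have "decidable 1 (\<lambda>zs. zs ! 0 \<in> prod_encode ` r)" unfolding computable_rel_def by (rule decidable_computable_set)
  from decidable_comp1[OF this recursive_prod_encode[OF recursive_proj recursive_proj]]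
  have "decidable 2 (\<lambda>xs. prod_encode (xs ! 0, xs ! 1) \<in> prod_encode ` r)" by simp
  then show ?thesis by (rule decidable_cong) (rule inj_image_mem_iff[OF inj_prod_encode])
qed

lemma unif_intro:
  assumes "decidable 3 (\<lambda>zs. R (zs ! 0) (zs ! 1) (zs ! 2))"
    and "\<And>n. X n = (\<Union>i\<in>{i. \<exists>t. R t n i}. Ob i)"
  shows "unif_Sigma01 Ob X"
  unfolding unif_Sigma01_def
  by (rule exI[of _ "{(a, b). \<exists>t. R t a b}"]) (use ce_rel_intro[OF assms(1)] assms(2) in simp)

lemma unif_elim:
  assumes "unif_Sigma01 Ob X"
  obtains R where "decidable 3 (\<lambda>zs. R (zs ! 0) (zs ! 1) (zs ! 2))"
    and "\<And>n. X n = (\<Union>i\<in>{i. \<exists>t. R t n i}. Ob i)"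
proof -
  obtain W where W: "ce_rel W" "\<forall>n. X n = (\<Union>i\<in>{i. (n, i) \<in> W}. Ob i)"
    using assms unfolding unif_Sigma01_def by blast
  obtain R where R: "decidable 3 (\<lambda>zs. R (zs ! 0) (zs ! 1) (zs ! 2))" "W = {(a, b). \<exists>t. R t a b}"
    using ce_rel_elim[OF W(1)] by blast
  show ?thesis by (rule that[OF R(1)]) (use W(2) R(2) in simp)
qed

lemma basis_cover: "topological_basis (range Ob) \<Longrightarrow> (\<Union>i. Ob i) = UNIV"
proof -
  assume B: "topological_basis (range Ob)"
  obtain B' where B': "B' \<subseteq> range Ob" "\<Union>B' = UNIV"
    using B unfolding topological_basis_def by (meson open_UNIV)
  show ?thesis
  proof (rule set_eqI)
    fix x
    have "x \<in> \<Union>B'" using B'(2) by simp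
    then obtain b where "b \<in> B'" "x \<in> b" by blast
    then show "x \<in> (\<Union>i. Ob i) \<longleftrightarrow> x \<in> UNIV" using B'(1) by blast
  qed
qed

lemma unif_UNIV:
  assumes "topological_basis (range Ob)"
  shows "unif_Sigma01 Ob (\<lambda>_. UNIV)"
  by (rule unif_intro[where R="\<lambda>_ _ _. True"]) (use basis_cover[OF assms] in \<open>auto intro: decidable_const\<close>)

text \<open>Unions of a uniformly \<open>\<Sigma>\<^sup>0\<^sub>1\<close> sequence along a decidable relation are again
  uniformly \<open>\<Sigma>\<^sup>0\<^sub>1\<close>: the witness for \<open>x \<in> \<Union>{X q | Rel q p}\<close> is the pair of \<open>q\<close>
  and the witness for \<open>x \<in> X q\<close>.\<close>
lemma unif_indexed_Union:
  assumes Rel: "decidable 2 (\<lambda>zs. Rel (zs ! 0) (zs ! 1))" and X: "unif_Sigma01 Ob X"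
  shows "unif_Sigma01 Ob (\<lambda>p. \<Union>q\<in>{q. Rel q p}. X q)"
proof -
  obtain R where R: "decidable 3 (\<lambda>zs. R (zs ! 0) (zs ! 1) (zs ! 2))"
    and XR: "\<And>n. X n = (\<Union>i\<in>{i. \<exists>t. R t n i}. Ob i)"
    by (rule unif_elim[OF X]) (rule that)
  define R' where "R' t p i \<longleftrightarrow> Rel (unpair_fst t) p \<and> R (unpair_snd t) (unpair_fst t) i" for t p i
  show ?thesis
  proof (rule unif_intro[where R = R'])
    show "decidable 3 (\<lambda>zs. R' (zs ! 0) (zs ! 1) (zs ! 2))" unfolding R'_def
      by (intro decidable_conj decidable_comp2[OF Rel] decidable_comp3[OF R]
          recursive_unpair_fst recursive_unpair_snd recursive_proj; simp)
    show "(\<Union>q\<in>{q. Rel q p}. X q) = (\<Union>i\<in>{i. \<exists>t. R' t p i}. Ob i)" for p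
      unfolding XR
    proof safe
      fix x q i t assume "Rel q p" "R t q i" "x \<in> Ob i"
      then have "R' (prod_encode (q, t)) p i" unfolding R'_def by simp
      then show "x \<in> (\<Union>i\<in>{i. \<exists>t. R' t p i}. Ob i)" using \<open>x \<in> Ob i\<close> by blast
    next
      fix x i t assume "R' t p i" "x \<in> Ob i"
      then show "x \<in> (\<Union>q\<in>{q. Rel q p}. \<Union>i\<in>{i. \<exists>t. R t q i}. Ob i)" unfolding R'_def by blast
    qed
  qed
qed

lemma unif_case_nat:
  assumes Z: "unif_Sigma01 Ob (\<lambda>_. Z)" and X: "unif_Sigma01 Ob X"
  shows "unif_Sigma01 Ob (case_nat Z X)"
proof -
  obtain RZ where RZ: "decidable 3 (\<lambda>zs. RZ (zs ! 0) (zs ! 1) (zs ! 2))"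
    and ZR: "\<And>n. Z = (\<Union>i\<in>{i. \<exists>t. RZ t n i}. Ob i)"
    by (rule unif_elim[OF Z]) (rule that)
  obtain RX where RX: "decidable 3 (\<lambda>zs. RX (zs ! 0) (zs ! 1) (zs ! 2))"
    and XR: "\<And>n. X n = (\<Union>i\<in>{i. \<exists>t. RX t n i}. Ob i)"
    by (rule unif_elim[OF X]) (rule that)
  show ?thesis
  proof (rule unif_intro[where R = "\<lambda>t n i. (n = 0 \<and> RZ t 0 i) \<or> (n \<noteq> 0 \<and> RX t (n - 1) i)"])
    show "decidable 3 (\<lambda>zs. (zs ! 1 = 0 \<and> RZ (zs ! 0) 0 (zs ! 2)) \<or>
        (zs ! 1 \<noteq> 0 \<and> RX (zs ! 0) (zs ! 1 - 1) (zs ! 2)))"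
      by (intro decidable_disj decidable_conj decidable_not decidable_eq decidable_comp3[OF RZ]
          decidable_comp3[OF RX] recursive_sub recursive_proj recursive_const; simp)
    show "case_nat Z X n = (\<Union>i\<in>{i. \<exists>t. (n = 0 \<and> RZ t 0 i) \<or> (n \<noteq> 0 \<and> RX t (n - 1) i)}. Ob i)" for n
      using ZR[of 0] XR[of "n - 1"] by (cases n) auto
  qed
qed

section \<open>Difference combinations along a well-order are \<open>\<Delta>\<^sup>0\<^sub>2\<close>\<close>

definition below_union :: "'i rel \<Rightarrow> ('i \<Rightarrow> 'a set) \<Rightarrow> 'i \<Rightarrow> 'a set" where
  "below_union r X p = (\<Union>q\<in>{q. (q, p) \<in> r \<and> q \<noteq> p}. X q)"

definition diff_comb :: "'i rel \<Rightarrow> 'i set \<Rightarrow> ('i \<Rightarrow> 'a set) \<Rightarrow> 'a set" where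
  "diff_comb r P X = (\<Union>p\<in>P. X p - below_union r X p)"

lemma least_index_exists:
  assumes wo: "Well_order r" and F: "Field r = N" and p: "p \<in> N" "x \<in> X p"
  obtains p0 where "p0 \<in> N" "x \<in> X p0" "x \<notin> below_union r X p0"
proof -
  have "wf (r - Id)" using wo unfolding well_order_on_def by blast
  then obtain p0 where p0: "p0 \<in> {p \<in> N. x \<in> X p}"
    and min: "\<And>q. (q, p0) \<in> r - Id \<Longrightarrow> q \<notin> {p \<in> N. x \<in> X p}"
    using wfE_min[of "r - Id" p "{p \<in> N. x \<in> X p}"] p by blast
  have "x \<notin> below_union r X p0"
    using min F unfolding below_union_def Field_def by blast
  then show ?thesis using that p0 by blast
qed

lemma diff_comb_least_index:
  assumes wo: "Well_order r" and F: "Field r = N" and PN: "P \<subseteq> N"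
    and p0: "p0 \<in> N" "x \<in> X p0" "x \<notin> below_union r X p0"
  shows "x \<in> diff_comb r P X \<longleftrightarrow> p0 \<in> P"
proof
  assume "x \<in> diff_comb r P X"
  then obtain p where p: "p \<in> P" "x \<in> X p" "x \<notin> below_union r X p"
    unfolding diff_comb_def by blast
  have "total_on N r" using wo F unfolding well_order_on_def linear_order_on_def by simp
  then have "p = p0 \<or> (p, p0) \<in> r \<or> (p0, p) \<in> r"
    using p(1) PN p0(1) unfolding total_on_def by blast
  then have "p = p0" using p p0 unfolding below_union_def by blast
  then show "p0 \<in> P" using p(1) by simp
qed (use p0 in \<open>auto simp: diff_comb_def\<close>)

lemma diff_comb_complement:
  assumes wo: "Well_order r" and F: "Field r = N" and PN: "P \<subseteq> N"
  shows "- diff_comb r P X = - (\<Union>p\<in>N. X p) \<union> diff_comb r (N - P) X"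
proof (intro set_eqI)
  fix x
  show "x \<in> - diff_comb r P X \<longleftrightarrow> x \<in> - (\<Union>p\<in>N. X p) \<union> diff_comb r (N - P) X"
  proof (cases "\<exists>p\<in>N. x \<in> X p")
    case True
    then obtain p0 where p0: "p0 \<in> N" "x \<in> X p0" "x \<notin> below_union r X p0"
      using least_index_exists[OF wo F] by metis
    show ?thesis
      using diff_comb_least_index[OF wo F PN p0] diff_comb_least_index[OF wo F _ p0, of "N - P"] p0
      by auto
  next
    case False
    then show ?thesis using PN unfolding diff_comb_def by auto
  qed
qed

lemma unif_below_union:
  assumes r: "computable_rel r" and X: "unif_Sigma01 Ob X"
  shows "unif_Sigma01 Ob (below_union r X)"
  unfolding below_union_def
  by (rule unif_indexed_Union[OF _ X])
    (intro decidable_conj decidable_not decidable_eq decidable_computable_rel[OF r] recursive_proj; simp)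

text \<open>It is \<open>\<Sigma>\<^sup>0\<^sub>2\<close> by definition; by \<open>diff_comb_complement\<close> its complement is
  \<open>\<Sigma>\<^sup>0\<^sub>2\<close>, the uncovered part being contributed by the index \<open>0\<close>.\<close>
lemma diff_comb_Delta02:
  assumes basis: "topological_basis (range Ob)"
    and wo: "Well_order r" and F: "Field r = N" and r: "computable_rel r"
    and N: "decidable 1 (\<lambda>zs. zs ! 0 \<in> N)" and P: "decidable 1 (\<lambda>zs. zs ! 0 \<in> P)" and PN: "P \<subseteq> N"
    and X: "unif_Sigma01 Ob X"
  shows "diff_comb r P X \<in> Delta02 Ob"
proof -
  have restrict: "unif_Sigma01 Ob (\<lambda>p. if p \<in> S then X p else {})"
    if S: "decidable 1 (\<lambda>zs. zs ! 0 \<in> S)" for S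
  proof -
    have "unif_Sigma01 Ob (\<lambda>p. \<Union>q\<in>{q. q = p \<and> p \<in> S}. X q)"
      by (rule unif_indexed_Union[OF _ X])
        (intro decidable_conj decidable_eq decidable_comp1[OF S] recursive_proj; simp)
    then show ?thesis by (rule back_subst[of "unif_Sigma01 Ob"]) (auto simp: fun_eq_iff)
  qed
  have Y: "unif_Sigma01 Ob (below_union r X)" by (rule unif_below_union[OF r X])
  have "diff_comb r P X = (\<Union>n. (if n \<in> P then X n else {}) - below_union r X n)"
    unfolding diff_comb_def by (auto split: if_splits)
  then have sigma: "diff_comb r P X \<in> Sigma02 Ob"
    unfolding Sigma02_def using restrict[OF P] Y by blast
  have NP: "decidable 1 (\<lambda>zs. zs ! 0 \<in> N - P)"
    using decidable_conj[OF N decidable_not[OF P]] by simp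
  have cover: "unif_Sigma01 Ob (\<lambda>_. \<Union>p\<in>N. X p)"
    using unif_indexed_Union[OF _ X, of "\<lambda>q p. q \<in> N"] decidable_comp1[OF N recursive_proj, of 0 2] by simp
  have UN_case_nat: "(\<Union>n. case_nat a f n) = a \<union> (\<Union>n. f n)" for a and f :: "nat \<Rightarrow> 'a set"
    by (subst UNIV_nat_eq) (simp add: image_image)
  have "- diff_comb r P X = - (\<Union>p\<in>N. X p) \<union> (\<Union>p. (if p \<in> N - P then X p else {}) - below_union r X p)"
    unfolding diff_comb_complement[OF wo F PN] by (auto simp: diff_comb_def split: if_splits)
  also have "\<dots> = (\<Union>n. case_nat (- (\<Union>p\<in>N. X p)) (\<lambda>p. (if p \<in> N - P then X p else {}) - below_union r X p) n)"
    by (simp only: UN_case_nat)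
  also have "\<dots> = (\<Union>n. case_nat UNIV (\<lambda>p. if p \<in> N - P then X p else {}) n
                         - case_nat (\<Union>p\<in>N. X p) (below_union r X) n)"
    by (rule SUP_cong[OF refl]) (simp add: Compl_eq_Diff_UNIV split: nat.split)
  finally have "- diff_comb r P X = \<dots>" .
  then have "- diff_comb r P X \<in> Sigma02 Ob"
    unfolding Sigma02_def
    using unif_case_nat[OF unif_UNIV[OF basis] restrict[OF NP]] unif_case_nat[OF cover Y] by blast
  then show ?thesis using sigma unfolding Delta02_def Pi02_def by blast
qed

lemma decidable_initial_segment: "N = UNIV \<or> (\<exists>k. N = {..<k}) \<Longrightarrow> decidable 1 (\<lambda>zs. zs ! 0 \<in> N)"
  using decidable_const[of 1 True] decidable_less[OF recursive_proj recursive_const, of 0 1]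
  by auto

text \<open>The second inclusion \<open>D\<^sub>\<alpha>(E) \<subseteq> \<Delta>\<^sup>0\<^sub>2(E)\<close>: the defining expression of a member of
  \<open>D\<^sub>\<alpha>(E)\<close> is, after transport along the isomorphism \<open>\<phi>\<close>, a difference combination
  along the computable well-order \<open>r\<close>.\<close>
lemma Dalpha_Delta02:
  assumes basis: "topological_basis (range Ob)" and A: "A \<in> Dalpha Ob alpha"
  shows "A \<in> Delta02 Ob"
proof -
  obtain r N phi X where N: "N = UNIV \<or> (\<exists>k. N = {..<k})" and wo: "Well_order r"
    and F: "Field r = N" and r: "computable_rel r" and iso: "iso r alpha phi"
    and P: "computable_set {n \<in> N. parity_differs alpha (phi n)}"
    and X: "unif_Sigma01 Ob X"
    and A_eq: "A = (\<Union>p\<in>{p \<in> N. parity_differs alpha (phi p)}.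
             X p - (\<Union>q\<in>{q \<in> N. (phi q, phi p) \<in> alpha \<and> phi q \<noteq> phi p}. X q))"
    using A unfolding Dalpha_def by blast
  have "{q \<in> N. (phi q, phi p) \<in> alpha \<and> phi q \<noteq> phi p} = {q. (q, p) \<in> r \<and> q \<noteq> p}"
    if "p \<in> N" for p
    using iso that F unfolding iso_iff2 bij_betw_def inj_on_def Field_def by blast
  then have "A = diff_comb r {p \<in> N. parity_differs alpha (phi p)} X"
    unfolding A_eq diff_comb_def below_union_def by auto
  then show ?thesis
    using diff_comb_Delta02[OF basis wo F r decidable_initial_segment[OF N] decidable_computable_set[OF P] _ X]
    by auto
qed

lemma Dunion_Delta02:
  assumes "topological_basis (range Ob)"
  shows "Dunion Ob \<subseteq> Delta02 Ob"
  unfolding Dunion_def using Dalpha_Delta02[OF assms] by blast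


section \<open>The Kleene--Brouwer order on finite sequences\<close>

definition kb_less :: "nat list \<Rightarrow> nat list \<Rightarrow> bool" where
  "kb_less s t \<longleftrightarrow> (length t < length s \<and> (\<forall>k<length t. s ! k = t ! k)) \<or>
     (\<exists>i<min (length s) (length t). (\<forall>k<i. s ! k = t ! k) \<and> s ! i < t ! i)"

text \<open>To see that \<open>kb_less\<close> is a linear order, a list is padded with \<open>\<infinity>\<close> to an infinite
  sequence, which is then compared lexicographically.\<close>
definition kb_key :: "nat list \<Rightarrow> nat \<Rightarrow> enat" where
  "kb_key s k = (if k < length s then enat (s ! k) else \<infinity>)"

definition lex_less :: "(nat \<Rightarrow> 'b::linorder) \<Rightarrow> (nat \<Rightarrow> 'b) \<Rightarrow> bool" where
  "lex_less f g \<longleftrightarrow> (\<exists>i. (\<forall>k<i. f k = g k) \<and> f i < g i)"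

lemma kb_less_lex_less: "kb_less s t \<longleftrightarrow> lex_less (kb_key s) (kb_key t)"
proof
  assume "kb_less s t"
  then show "lex_less (kb_key s) (kb_key t)"
    unfolding kb_less_def
  proof (elim disjE exE conjE)
    assume "length t < length s" "\<forall>k<length t. s ! k = t ! k"
    then show ?thesis unfolding lex_less_def kb_key_def by (intro exI[of _ "length t"]) auto
  next
    fix i assume "i < min (length s) (length t)" "\<forall>k<i. s ! k = t ! k" "s ! i < t ! i"
    then show ?thesis unfolding lex_less_def kb_key_def by (intro exI[of _ i]) auto
  qed
next
  assume "lex_less (kb_key s) (kb_key t)"
  then obtain i where eq: "\<forall>k<i. kb_key s k = kb_key t k" and lt: "kb_key s i < kb_key t i" unfolding lex_less_def by blast
  have ils: "i < length s" using lt unfolding kb_key_def by (auto split: if_splits)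
  show "kb_less s t"
  proof (cases "i < length t")
    case True
    then have "i < min (length s) (length t)" "\<forall>k<i. s ! k = t ! k" "s ! i < t ! i"
      using ils eq lt unfolding kb_key_def by auto
    then show ?thesis unfolding kb_less_def by blast
  next
    case False
    then have "length t < length s" "\<forall>k<length t. s ! k = t ! k"
      using ils eq unfolding kb_key_def by (auto split: if_splits)
    then show ?thesis unfolding kb_less_def by blast
  qed
qed

lemma lex_less_irrefl: "\<not> lex_less f f"
  unfolding lex_less_def by auto

lemma lex_less_trans: "lex_less f g \<Longrightarrow> lex_less g h \<Longrightarrow> lex_less f h"
proof -
  assume "lex_less f g" "lex_less g h"
  then obtain i j where i: "\<forall>k<i. f k = g k" "f i < g i" and j: "\<forall>k<j. g k = h k" "g j < h j"
    unfolding lex_less_def by blast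
  show "lex_less f h" unfolding lex_less_def
  proof (cases i j rule: linorder_cases)
    case less then show "\<exists>i. (\<forall>k<i. f k = h k) \<and> f i < h i" using i j by (intro exI[of _ i]) auto
  next
    case equal then show "\<exists>i. (\<forall>k<i. f k = h k) \<and> f i < h i" using i j by (intro exI[of _ i]) auto
  next
    case greater then show "\<exists>i. (\<forall>k<i. f k = h k) \<and> f i < h i" using i j by (intro exI[of _ j]) auto
  qed
qed

lemma lex_less_total: "f \<noteq> g \<Longrightarrow> lex_less f g \<or> lex_less g f"
proof -
  assume "f \<noteq> g"
  then obtain k where "f k \<noteq> g k" by auto
  define i where "i = (LEAST k. f k \<noteq> g k)"
  have ne: "f i \<noteq> g i" unfolding i_def by (rule LeastI[of _ k]) fact
  have eq: "\<forall>k<i. f k = g k" unfolding i_def using not_less_Least by blast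
  show ?thesis unfolding lex_less_def
  proof (cases "f i < g i")
    case True then show "(\<exists>i. (\<forall>k<i. f k = g k) \<and> f i < g i) \<or> (\<exists>i. (\<forall>k<i. g k = f k) \<and> g i < f i)"
      using eq by blast
  next
    case False then have "g i < f i" using ne by auto
    then show "(\<exists>i. (\<forall>k<i. f k = g k) \<and> f i < g i) \<or> (\<exists>i. (\<forall>k<i. g k = f k) \<and> g i < f i)"
      using eq by (metis)
  qed
qed

lemma kb_key_inj: "kb_key s = kb_key t \<Longrightarrow> s = t"
proof -
  assume e: "kb_key s = kb_key t"
  have "length s = length t"
  proof (rule ccontr)
    assume "length s \<noteq> length t"
    then consider "length s < length t" | "length t < length s" by linarith
    then show False
    proof cases
      case 1 then have "kb_key s (length s) \<noteq> kb_key t (length s)" unfolding kb_key_def by auto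
      then show False using e by simp
    next
      case 2 then have "kb_key s (length t) \<noteq> kb_key t (length t)" unfolding kb_key_def by auto
      then show False using e by simp
    qed
  qed
  moreover have "s ! k = t ! k" if "k < length s" for k
    using fun_cong[OF e, of k] that \<open>length s = length t\<close> unfolding kb_key_def by auto
  ultimately show "s = t" by (rule nth_equalityI)
qed

lemma kb_less_irrefl: "\<not> kb_less s s"
  by (simp add: kb_less_lex_less lex_less_irrefl)

lemma kb_less_trans: "kb_less s t \<Longrightarrow> kb_less t u \<Longrightarrow> kb_less s u"
  by (simp add: kb_less_lex_less) (rule lex_less_trans)

lemma kb_less_asym: "kb_less s t \<Longrightarrow> \<not> kb_less t s"
  using kb_less_trans kb_less_irrefl by blast

lemma kb_less_total: "s \<noteq> t \<Longrightarrow> kb_less s t \<or> kb_less t s"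
  by (simp add: kb_less_lex_less) (metis lex_less_total kb_key_inj)

lemma kb_less_ext: "take (length s) t = s \<Longrightarrow> length s < length t \<Longrightarrow> kb_less t s"
  unfolding kb_less_def by (metis nth_take)

lemma kb_less_branch:
  assumes "take n s = take n t" "n < length s" "n < length t" "s ! n < t ! n"
  shows "kb_less s t"
  unfolding kb_less_def using assms by (metis min_less_iff_conj nth_take)

text \<open>The one-step extension relation of a set \<open>T\<close> of lists (a tree when \<open>T\<close> is closed
  under prefixes); it is well-founded iff \<open>T\<close> has no infinite branch.\<close>
definition child_rel :: "(nat list \<Rightarrow> bool) \<Rightarrow> (nat list \<times> nat list) set" where
  "child_rel T = {(t, s). T t \<and> length t = Suc (length s) \<and> take (length s) t = s}"

text \<open>A prefix-closed tree without infinite branches has a well-founded extension relation: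
  an infinite descending chain \<open>f\<close> of one-step extensions determines the branch
  \<open>g k = f (Suc k) ! k\<close>, all of whose finite initial segments lie in \<open>T\<close>.\<close>
lemma wf_child_rel:
  assumes pref: "\<And>s n. T s \<Longrightarrow> T (take n s)"
    and no_branch: "\<And>g. \<exists>n. \<not> T (map g [0..<n])"
  shows "wf (child_rel T)"
proof (rule ccontr)
  assume "\<not> wf (child_rel T)"
  then obtain f where f: "\<And>i. (f (Suc i), f i) \<in> child_rel T"
    unfolding wf_iff_no_infinite_down_chain by blast
  have len: "length (f i) = length (f 0) + i" for i
    by (induction i) (use f in \<open>simp_all add: child_rel_def\<close>)
  have prefix: "take (length (f i)) (f (i + j)) = f i" for i j
  proof (induction j)
    case (Suc j)
    have "take (length (f (i + j))) (f (Suc (i + j))) = f (i + j)"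
      using f[of "i + j"] unfolding child_rel_def by auto
    moreover have "length (f i) \<le> length (f (i + j))" using len[of i] len[of "i + j"] by linarith
    ultimately have "take (length (f i)) (f (Suc (i + j))) = take (length (f i)) (f (i + j))"
      using take_take[of "length (f i)" "length (f (i + j))" "f (Suc (i + j))"] by (simp add: min_absorb1)
    then show ?case using Suc.IH by simp
  qed simp
  define g where "g k = f (Suc k) ! k" for k
  have "map g [0..<n] = take n (f (Suc n))" for n
  proof (rule nth_equalityI)
    show "length (map g [0..<n]) = length (take n (f (Suc n)))" using len[of "Suc n"] by simp
    fix k assume "k < length (map g [0..<n])"
    then have k: "k < n" by simp
    have "take (length (f (Suc k))) (f (Suc n)) = f (Suc k)"
      using prefix[of "Suc k" "n - k"] k by simp
    moreover have "k < length (f (Suc k))" using len[of "Suc k"] by simp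
    ultimately have "f (Suc n) ! k = g k" unfolding g_def by (metis nth_take)
    then show "map g [0..<n] ! k = take n (f (Suc n)) ! k" using k by simp
  qed
  moreover have "T (f (Suc n))" for n using f[of n] unfolding child_rel_def by simp
  ultimately have "T (map g [0..<n])" for n using pref[of "f (Suc n)" n] by simp
  then show False using no_branch by blast
qed

lemma kb_minimal_from_branch:
  assumes ext: "\<And>t. t \<in> Q \<Longrightarrow> take (length s) t = s \<and> length s < length t"
    and m: "m \<in> Q" and first: "\<And>t. t \<in> Q \<Longrightarrow> m ! length s \<le> t ! length s"
    and min_branch: "\<And>q. q \<in> Q \<Longrightarrow> q ! length s = m ! length s \<Longrightarrow> \<not> kb_less q m"
    and q: "q \<in> insert s Q"
  shows "\<not> kb_less q m"
proof -
  have "q \<noteq> s \<Longrightarrow> q ! length s \<noteq> m ! length s \<Longrightarrow> kb_less m q"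
    using q ext[OF m] ext first[of q] by (intro kb_less_branch[of "length s"]) auto
  moreover have "q = s \<Longrightarrow> kb_less m q" using ext[OF m] by (simp add: kb_less_ext)
  ultimately show ?thesis using q min_branch kb_less_asym by blast
qed

lemma kb_less_wf_subtree:
  assumes pref: "\<And>s n. T s \<Longrightarrow> T (take n s)" and wf: "wf (child_rel T)" and s: "T s"
  shows "Q \<subseteq> {t. T t \<and> take (length s) t = s} \<Longrightarrow> Q \<noteq> {} \<Longrightarrow> \<exists>m\<in>Q. \<forall>q\<in>Q. \<not> kb_less q m"
  using wf s
proof (induction s arbitrary: Q rule: wf_induct_rule)
  case (less s)
  define Q' where "Q' = Q - {s}"
  show ?case
  proof (cases "Q' = {}")
    case True
    then have "Q = {s}" using less.prems unfolding Q'_def by auto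
    then show ?thesis using kb_less_irrefl by auto
  next
    case False
    have ext: "take (length s) t = s \<and> length s < length t" if "t \<in> Q'" for t
    proof -
      have "take (length s) t = s" "t \<noteq> s" using that less.prems(1) unfolding Q'_def by auto
      then show ?thesis by (metis linorder_not_le take_all)
    qed
    define a0 where "a0 = (LEAST a. \<exists>t\<in>Q'. t ! length s = a)"
    obtain t0 where t0: "t0 \<in> Q'" using False by blast
    have a0: "\<exists>t\<in>Q'. t ! length s = a0"
      unfolding a0_def by (rule LeastI[of _ "t0 ! length s"]) (use t0 in blast)
    have a0_least: "a0 \<le> t ! length s" if "t \<in> Q'" for t
      unfolding a0_def by (rule Least_le) (use that in blast)
    define Q0 where "Q0 = {t\<in>Q'. t ! length s = a0}"
    have Q0: "Q0 \<subseteq> {t. T t \<and> take (length (s @ [a0])) t = s @ [a0]}"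
      using ext less.prems(1) unfolding Q0_def Q'_def by (auto simp: take_Suc_conv_app_nth)
    obtain t1 where t1: "t1 \<in> Q0" using a0 unfolding Q0_def by blast
    have T_s': "T (s @ [a0])"
      using pref[of t1 "length (s @ [a0])"] Q0 t1 by auto
    then have child: "(s @ [a0], s) \<in> child_rel T" unfolding child_rel_def by simp
    obtain m where m: "m \<in> Q0" and m_min: "\<forall>q\<in>Q0. \<not> kb_less q m"
      using less.IH[OF child Q0 _ T_s'] t1 by blast
    have m_Q': "m \<in> Q'" and m_a0: "m ! length s = a0" using m unfolding Q0_def by auto
    have "\<not> kb_less q m" if "q \<in> Q" for q
    proof (rule kb_minimal_from_branch[where Q = Q' and s = s])
      show "q \<in> insert s Q'" using that unfolding Q'_def by blast
      show "m ! length s \<le> t ! length s" if "t \<in> Q'" for t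
        using a0_least[OF that] m_a0 by simp
      show "\<not> kb_less q' m" if "q' \<in> Q'" "q' ! length s = m ! length s" for q'
        using m_min that m_a0 unfolding Q0_def by blast
    qed (use ext m_Q' in blast)+
    then show ?thesis using m unfolding Q0_def Q'_def by blast
  qed
qed

lemma kb_less_wf:
  assumes pref: "\<And>s n. T s \<Longrightarrow> T (take n s)" and wf: "wf (child_rel T)"
    and Q: "x \<in> Q" "Q \<subseteq> {t. T t}"
  shows "\<exists>m\<in>Q. \<forall>q\<in>Q. \<not> kb_less q m"
proof -
  have "T []" using pref[of x 0] Q by auto
  from kb_less_wf_subtree[OF pref wf this] Q show ?thesis by auto
qed

text \<open>A list \<open>[e\<^sub>0, \<dots>, e\<^sub>k\<^sub>-\<^sub>1]\<close> is coded by the Cantor pair of its length and the nested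
  pair \<open>\<langle>e\<^sub>0, \<langle>e\<^sub>1, \<dots> \<langle>e\<^sub>k\<^sub>-\<^sub>1, 0\<rangle>\<dots>\<rangle>\<rangle>\<close>.  Decoding reads \<open>k\<close> entries off an arbitrary number;
  the numbers that arise as codes are the canonical ones (with tail \<open>0\<close>).\<close>

definition tail_iter :: "nat \<Rightarrow> nat \<Rightarrow> nat" where "tail_iter k c = (unpair_snd ^^ k) c"
definition code_nth :: "nat \<Rightarrow> nat \<Rightarrow> nat" where "code_nth k c = unpair_fst (tail_iter k c)"
definition decode_list :: "nat \<Rightarrow> nat list" where "decode_list m = map (\<lambda>k. code_nth k (unpair_snd m)) [0..<unpair_fst m]"
definition canonical :: "nat \<Rightarrow> bool" where "canonical m \<longleftrightarrow> tail_iter (unpair_fst m) (unpair_snd m) = 0"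

primrec encode_entries :: "nat list \<Rightarrow> nat" where
  "encode_entries [] = 0"
| "encode_entries (e # s) = prod_encode (e, encode_entries s)"

definition encode_list :: "nat list \<Rightarrow> nat" where "encode_list s = prod_encode (length s, encode_entries s)"

lemma tail_iter_Suc: "tail_iter (Suc k) c = unpair_snd (tail_iter k c)"
  unfolding tail_iter_def by simp

lemma tail_iter_Suc': "tail_iter (Suc k) c = tail_iter k (unpair_snd c)"
  unfolding tail_iter_def by (simp add: funpow_Suc_right del: funpow.simps)

lemma length_decode_list[simp]: "length (decode_list m) = unpair_fst m"
  unfolding decode_list_def by simp

lemma nth_decode_list: "k < unpair_fst m \<Longrightarrow> decode_list m ! k = code_nth k (unpair_snd m)"
  unfolding decode_list_def by simp

lemma tail_iter_0[simp]: "tail_iter 0 c = c"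
  unfolding tail_iter_def by simp

lemma tail_iter_encode_entries: "k \<le> length s \<Longrightarrow> tail_iter k (encode_entries s) = encode_entries (drop k s)"
proof (induction s arbitrary: k)
  case Nil then show ?case by (simp add: tail_iter_def)
next
  case (Cons e s)
  then show ?case by (cases k) (auto simp: tail_iter_Suc')
qed

lemma code_nth_encode_entries: "k < length s \<Longrightarrow> code_nth k (encode_entries s) = s ! k"
  unfolding code_nth_def by (simp add: tail_iter_encode_entries Cons_nth_drop_Suc[symmetric])

lemma decode_list_encode_list[simp]: "decode_list (encode_list s) = s"
  unfolding decode_list_def encode_list_def by (intro nth_equalityI) (auto simp: code_nth_encode_entries)

lemma unpair_fst_encode_list[simp]: "unpair_fst (encode_list s) = length s"
  unfolding encode_list_def by simp

lemma canonical_encode_list: "canonical (encode_list s)"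
  unfolding canonical_def encode_list_def by (simp add: tail_iter_encode_entries)

lemma encode_list_decode_list: assumes "canonical m" shows "encode_list (decode_list m) = m"
proof -
  have "encode_entries (drop (unpair_fst m - d) (decode_list m)) = tail_iter (unpair_fst m - d) (unpair_snd m)" if "d \<le> unpair_fst m" for d
    using that
  proof (induction d)
    case 0 then show ?case using assms by (simp add: canonical_def)
  next
    case (Suc d)
    define k where "k = unpair_fst m - Suc d"
    have k: "k < unpair_fst m" "Suc k = unpair_fst m - d" using Suc.prems unfolding k_def by auto
    have "drop k (decode_list m) = decode_list m ! k # drop (Suc k) (decode_list m)" using k(1) by (simp add: Cons_nth_drop_Suc)
    then have "encode_entries (drop k (decode_list m)) = prod_encode (code_nth k (unpair_snd m), tail_iter (Suc k) (unpair_snd m))"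
      using Suc.IH Suc.prems k by (simp add: nth_decode_list)
    also have "\<dots> = tail_iter k (unpair_snd m)" by (simp add: code_nth_def tail_iter_Suc)
    finally show ?case unfolding k_def .
  qed
  from this[of "unpair_fst m"] show ?thesis unfolding encode_list_def by simp
qed

lemma decode_list_inj: "canonical m \<Longrightarrow> canonical m' \<Longrightarrow> decode_list m = decode_list m' \<Longrightarrow> m = m'"
  by (metis encode_list_decode_list)

definition valid_code :: "(nat list \<Rightarrow> bool) \<Rightarrow> nat \<Rightarrow> bool" where
  "valid_code T m \<longleftrightarrow> canonical m \<and> T (decode_list m)"

definition code_less :: "(nat list \<Rightarrow> bool) \<Rightarrow> nat \<Rightarrow> nat \<Rightarrow> bool" where
  "code_less T m m' \<longleftrightarrow> (\<not> valid_code T m \<and> \<not> valid_code T m' \<and> m < m') \<or> (\<not> valid_code T m \<and> valid_code T m') \<or>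
      (valid_code T m \<and> valid_code T m' \<and> kb_less (decode_list m) (decode_list m'))"

lemma code_less_irrefl: "\<not> code_less T m m"
  unfolding code_less_def using kb_less_irrefl by auto

lemma code_less_trans: "code_less T a b \<Longrightarrow> code_less T b c \<Longrightarrow> code_less T a c"
  unfolding code_less_def using kb_less_trans by auto

lemma code_less_total: "a \<noteq> b \<Longrightarrow> code_less T a b \<or> code_less T b a"
proof -
  assume ab: "a \<noteq> b"
  show ?thesis
  proof (cases "valid_code T a \<and> valid_code T b")
    case True
    then have "decode_list a \<noteq> decode_list b" using decode_list_inj ab unfolding valid_code_def by blast
    then show ?thesis using kb_less_total True unfolding code_less_def by blast
  next
    case False
    then show ?thesis using ab unfolding code_less_def by auto
  qed
qed

lemma code_less_wf:
  assumes pref: "\<And>s n. T s \<Longrightarrow> T (take n s)" and wfe: "wf (child_rel T)"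
  shows "wf {(a, b). code_less T a b}"
proof (rule wfI_min)
  fix x :: nat and Q assume xQ: "x \<in> Q"
  show "\<exists>z\<in>Q. \<forall>y. (y, z) \<in> {(a, b). code_less T a b} \<longrightarrow> y \<notin> Q"
  proof (cases "\<exists>q\<in>Q. \<not> valid_code T q")
    case True
    define z where "z = (LEAST q. q \<in> Q \<and> \<not> valid_code T q)"
    have z: "z \<in> Q" "\<not> valid_code T z" using True LeastI_ex[of "\<lambda>q. q \<in> Q \<and> \<not> valid_code T q"] unfolding z_def by auto
    have "y \<notin> Q" if "code_less T y z" for y
    proof
      assume "y \<in> Q"
      have "\<not> valid_code T y" "y < z" using that z unfolding code_less_def by auto
      then show False using not_less_Least[of y "\<lambda>q. q \<in> Q \<and> \<not> valid_code T q"] \<open>y \<in> Q\<close> unfolding z_def by blast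
    qed
    then show ?thesis using z by blast
  next
    case False
    have "\<exists>m\<in>decode_list ` Q. \<forall>q\<in>decode_list ` Q. \<not> kb_less q m"
      by (rule kb_less_wf[OF pref wfe, of "decode_list x"]) (use xQ False in \<open>auto simp: valid_code_def\<close>)
    then obtain z where z: "z \<in> Q" and zmin: "\<forall>q\<in>Q. \<not> kb_less (decode_list q) (decode_list z)" by blast
    have "y \<notin> Q" if "code_less T y z" for y
      using that zmin False unfolding code_less_def by blast
    then show ?thesis using z by blast
  qed
qed

text \<open>Doubling a strict order on \<open>\<nat>\<close>: the number \<open>n\<close> stands for the copy \<open>n mod 2\<close> of the
  element \<open>n div 2\<close>, and each element is replaced by its two copies.  This turns the order
  type \<open>\<beta>\<close> into \<open>2\<cdot>\<beta>\<close>, in which the parity of a position is the parity of the number.\<close>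

definition dbl_less :: "(nat \<Rightarrow> nat \<Rightarrow> bool) \<Rightarrow> nat \<Rightarrow> nat \<Rightarrow> bool" where
  "dbl_less lt n n' \<longleftrightarrow> lt (n div 2) (n' div 2) \<or> (n div 2 = n' div 2 \<and> n mod 2 < n' mod 2)"

definition dbl_rel :: "(nat \<Rightarrow> nat \<Rightarrow> bool) \<Rightarrow> nat rel" where
  "dbl_rel lt = {(n, n'). n = n' \<or> dbl_less lt n n'}"

locale strict_wo =
  fixes lt :: "nat \<Rightarrow> nat \<Rightarrow> bool"
  assumes irr: "\<not> lt a a" and trn: "lt a b \<Longrightarrow> lt b c \<Longrightarrow> lt a c"
    and tot: "a \<noteq> b \<Longrightarrow> lt a b \<or> lt b a" and wfl: "wf {(a, b). lt a b}"
begin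

lemma asym: "lt a b \<Longrightarrow> \<not> lt b a" using irr trn by blast

definition R where "R = {(a, b). a = b \<or> lt a b}"

lemma Field_R: "Field R = UNIV"
  unfolding R_def Field_def by auto

lemma WO: "Well_order R"
proof -
  have "R - Id = {(a, b). lt a b}" unfolding R_def using irr by auto
  then have "wf (R - Id)" using wfl by simp
  moreover have "linear_order_on UNIV R"
    unfolding linear_order_on_def partial_order_on_def preorder_on_def
  proof (intro conjI)
    show "R \<subseteq> UNIV \<times> UNIV" by simp
    show "refl_on UNIV R" unfolding refl_on_def R_def by simp
    show "trans R" unfolding trans_def R_def using trn by blast
    show "antisym R" unfolding antisym_def R_def using asym by blast
    show "total_on UNIV R" unfolding total_on_def R_def using tot by blast
  qed
  ultimately show ?thesis unfolding well_order_on_def Field_R by simp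
qed

end

text \<open>Doubling preserves strict well-orders (lexicographic order on \<open>(n div 2, n mod 2)\<close>).\<close>
lemma strict_wo_dbl_less:
  assumes "strict_wo lt" shows "strict_wo (dbl_less lt)"
proof -
  interpret strict_wo lt by fact
  show ?thesis
  proof
    show "\<not> dbl_less lt a a" for a unfolding dbl_less_def using irr by auto
    show "dbl_less lt a c" if ab: "dbl_less lt a b" and bc: "dbl_less lt b c" for a b c
    proof -
      consider "lt (a div 2) (b div 2)" | "a div 2 = b div 2" "a mod 2 < b mod 2" using ab unfolding dbl_less_def by blast
      moreover consider "lt (b div 2) (c div 2)" | "b div 2 = c div 2" "b mod 2 < c mod 2" using bc unfolding dbl_less_def by blast
      ultimately show ?thesis unfolding dbl_less_def
        by cases (cases, (metis trn less_trans)+)+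
    qed
    show "dbl_less lt a b \<or> dbl_less lt b a" if "a \<noteq> b" for a b
    proof (cases "a div 2 = b div 2")
      case True
      then have "a mod 2 \<noteq> b mod 2" using that by (metis div_mult_mod_eq)
      then show ?thesis using True unfolding dbl_less_def by auto
    next
      case False then show ?thesis using tot unfolding dbl_less_def by blast
    qed
    have "{(a, b). dbl_less lt a b} \<subseteq> inv_image ({(a, b). lt a b} <*lex*> less_than) (\<lambda>n. (n div 2, n mod 2))"
      unfolding dbl_less_def by auto
    moreover have "wf (inv_image ({(a, b). lt a b} <*lex*> less_than) (\<lambda>n. (n div 2, n mod 2)))"
      using wfl by (intro wf_inv_image wf_lex_prod) auto
    ultimately show "wf {(a, b). dbl_less lt a b}" by (rule wf_subset[rotated])
  qed
qed

section \<open>Parity in the doubled order\<close>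

text \<open>In a doubled well-order every position comes paired with its partner \<open>n xor 1\<close>.
  Consequently the finite part of the position of \<open>n\<close> (in the sense of \<open>elem_finpart\<close>) has
  the parity of \<open>n\<close>, and the finite part of the whole order type is even.\<close>

definition partner :: "nat \<Rightarrow> nat" where "partner b = (if even b then Suc b else b - 1)"

lemma partner_div: "partner b div 2 = b div 2"
  unfolding partner_def by (cases "even b") (auto elim: evenE oddE)

lemma partner_partner: "partner (partner b) = b"
  unfolding partner_def by (cases "even b") (auto elim: oddE)

lemma same_half: "y div 2 = b div 2 \<Longrightarrow> y = b \<or> y = partner b"
  unfolding partner_def by (cases "even b"; cases "even y") (auto elim!: evenE oddE)

lemma card_partner_even:
  assumes cl: "\<And>b. b \<in> D \<Longrightarrow> partner b \<in> D"
  shows "even (card D)"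
proof -
  define M where "M = (\<lambda>b. b div 2) ` D"
  have D: "D = {b. b div 2 \<in> M}"
  proof safe
    fix b assume "b div 2 \<in> M"
    then obtain d where d: "d \<in> D" "b div 2 = d div 2" unfolding M_def by blast
    then show "b \<in> D" using same_half[OF d(2)] cl by auto
  qed (auto simp: M_def)
  have "bij_betw (\<lambda>(q, e). 2 * q + e) (M \<times> {0, 1}) {b. b div 2 \<in> M}"
  proof (rule bij_betwI[where g="\<lambda>b. (b div 2, b mod 2)"])
    show "(\<lambda>(q, e). 2 * q + e) \<in> M \<times> {0, 1} \<rightarrow> {b. b div 2 \<in> M}" by auto
    show "(\<lambda>b. (b div 2, b mod 2)) \<in> {b. b div 2 \<in> M} \<rightarrow> M \<times> {0, 1}" by auto
  qed auto
  then have "card {b. b div 2 \<in> M} = card (M \<times> {0::nat, 1})" by (simp add: bij_betw_same_card)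
  also have "\<dots> = card M * 2" by (simp add: card_cartesian_product)
  finally show ?thesis using D by simp
qed

definition finite_below :: "nat rel \<Rightarrow> nat \<Rightarrow> nat set" where
  "finite_below r a = {b. (b, a) \<in> r \<and> finite {x. (b, x) \<in> r \<and> (x, a) \<in> r}}"

lemma elem_finpart_finite_below: "elem_finpart r a = card (finite_below r a) - 1"
  unfolding elem_finpart_def finite_below_def ..

context strict_wo
begin

abbreviation "D \<equiv> dbl_rel lt"
abbreviation "dless \<equiv> dbl_less lt"

lemma D_iff: "(a, b) \<in> D \<longleftrightarrow> a = b \<or> dless a b"
  unfolding dbl_rel_def by simp

lemma strict_wo_dless: "strict_wo dless" by (rule strict_wo_dbl_less) (unfold_locales)

lemma D_trans: "(a, b) \<in> D \<Longrightarrow> (b, c) \<in> D \<Longrightarrow> (a, c) \<in> D"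
  using strict_wo.trn[OF strict_wo_dless] unfolding D_iff by blast

lemma dless_asym: "dless a b \<Longrightarrow> \<not> dless b a" using strict_wo.asym[OF strict_wo_dless] .

text \<open>Since \<open>D\<close> is a well-order, \<open>finite_below D a\<close> is an interval of finitely many elements.\<close>
lemma finite_below_finite: "finite (finite_below D a)"
proof -
  have aF: "a \<in> finite_below D a"
  proof -
    have "{x. (a, x) \<in> D \<and> (x, a) \<in> D} = {a}" unfolding D_iff using dless_asym by auto
    then show ?thesis unfolding finite_below_def D_iff by simp
  qed
  obtain b0 where b0: "b0 \<in> finite_below D a" and min: "\<And>y. (y, b0) \<in> {(a, b). dless a b} \<Longrightarrow> y \<notin> finite_below D a"
    using wfE_min[OF strict_wo.wfl[OF strict_wo_dless] aF] by blast
  have "finite_below D a \<subseteq> {x. (b0, x) \<in> D \<and> (x, a) \<in> D}"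
  proof
    fix b assume b: "b \<in> finite_below D a"
    then have "\<not> dless b b0" using min by blast
    then have "(b0, b) \<in> D" using strict_wo.tot[OF strict_wo_dless, of b b0] unfolding D_iff by blast
    then show "b \<in> {x. (b0, x) \<in> D \<and> (x, a) \<in> D}" using b unfolding finite_below_def by blast
  qed
  moreover have "finite {x. (b0, x) \<in> D \<and> (x, a) \<in> D}" using b0 unfolding finite_below_def by blast
  ultimately show ?thesis by (rule finite_subset)
qed

lemma dless_even_odd: "dless (2 * m) (Suc (2 * m))"
  unfolding dbl_less_def by simp

lemma below_odd: "dless y (Suc (2 * m)) \<Longrightarrow> (y, 2 * m) \<in> D"
proof -
  assume "dless y (Suc (2 * m))"
  then consider "lt (y div 2) m" | "y div 2 = m" "y mod 2 < 1" unfolding dbl_less_def by auto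
  then show ?thesis
  proof cases
    case 1 then show ?thesis unfolding D_iff dbl_less_def by simp
  next
    case 2 then have "y = 2 * m" by (metis div_mult_mod_eq less_one mult.commute add_0_right)
    then show ?thesis unfolding D_iff by simp
  qed
qed

lemma finite_below_odd: "finite_below D (Suc (2 * m)) = insert (Suc (2 * m)) (finite_below D (2 * m))"
proof safe
  show "Suc (2 * m) \<in> finite_below D (Suc (2 * m))"
  proof -
    have "{x. (Suc (2 * m), x) \<in> D \<and> (x, Suc (2 * m)) \<in> D} = {Suc (2 * m)}" unfolding D_iff using dless_asym by auto
    then show ?thesis unfolding finite_below_def D_iff by simp
  qed
next
  fix b assume b: "b \<in> finite_below D (Suc (2 * m))" "b \<notin> finite_below D (2 * m)"
  show "b = Suc (2 * m)"
  proof (rule ccontr)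
    assume ne: "b \<noteq> Suc (2 * m)"
    then have bd: "dless b (Suc (2 * m))" using b unfolding finite_below_def D_iff by blast
    have b2: "(b, 2 * m) \<in> D" by (rule below_odd[OF bd])
    have "{x. (b, x) \<in> D \<and> (x, 2 * m) \<in> D} \<subseteq> {x. (b, x) \<in> D \<and> (x, Suc (2 * m)) \<in> D}"
      using D_trans[OF _ iffD2[OF D_iff, OF disjI2[OF dless_even_odd]]] by blast
    then have "finite {x. (b, x) \<in> D \<and> (x, 2 * m) \<in> D}" using b(1) unfolding finite_below_def by (blast intro: finite_subset)
    then show False using b b2 unfolding finite_below_def by blast
  qed
next
  fix b assume b: "b \<in> finite_below D (2 * m)"
  have b2: "(b, 2 * m) \<in> D" using b unfolding finite_below_def by blast
  have b3: "(b, Suc (2 * m)) \<in> D" using D_trans[OF b2] dless_even_odd unfolding D_iff by blast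
  have "{x. (b, x) \<in> D \<and> (x, Suc (2 * m)) \<in> D} \<subseteq> insert (Suc (2 * m)) {x. (b, x) \<in> D \<and> (x, 2 * m) \<in> D}"
    using below_odd unfolding D_iff by blast
  moreover have "finite {x. (b, x) \<in> D \<and> (x, 2 * m) \<in> D}" using b unfolding finite_below_def by blast
  ultimately have "finite {x. (b, x) \<in> D \<and> (x, Suc (2 * m)) \<in> D}" by (rule finite_subset[OF _ finite_insert[THEN iffD2]])
  then show "b \<in> finite_below D (Suc (2 * m))" using b3 unfolding finite_below_def by blast
qed

lemma odd_notin_finite_below: "Suc (2 * m) \<notin> finite_below D (2 * m)"
  unfolding finite_below_def D_iff using dless_asym[OF dless_even_odd] by auto

lemma finite_below_even_partner:
  assumes b: "b \<in> finite_below D (2 * m) - {2 * m}"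
  shows "partner b \<in> finite_below D (2 * m) - {2 * m}"
proof -
  have bd: "dless b (2 * m)" using b unfolding finite_below_def D_iff by blast
  have bm: "b div 2 \<noteq> m"
  proof
    assume "b div 2 = m"
    then have "b = 2 * m \<or> b = Suc (2 * m)" by auto
    then show False using b odd_notin_finite_below by auto
  qed
  then have lbm: "lt (b div 2) m" using bd unfolding dbl_less_def by auto
  define b' where "b' = partner b"
  have hb': "b' div 2 = b div 2" unfolding b'_def by (rule partner_div)
  have b'd: "dless b' (2 * m)" using lbm hb' unfolding dbl_less_def by simp
  have b'ne: "b' \<noteq> 2 * m" using bm hb' by auto
  have sub: "{x. (b', x) \<in> D \<and> (x, 2 * m) \<in> D} \<subseteq> insert b' {x. (b, x) \<in> D \<and> (x, 2 * m) \<in> D}"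
  proof
    fix y assume y: "y \<in> {x. (b', x) \<in> D \<and> (x, 2 * m) \<in> D}"
    show "y \<in> insert b' {x. (b, x) \<in> D \<and> (x, 2 * m) \<in> D}"
    proof (cases "y = b'")
      case False
      then have "dless b' y" using y unfolding D_iff by blast
      then consider "lt (b' div 2) (y div 2)" | "b' div 2 = y div 2" unfolding dbl_less_def by auto
      then have "(b, y) \<in> D"
      proof cases
        case 1 then show ?thesis using hb' unfolding D_iff dbl_less_def by simp
      next
        case 2 then have "y = b' \<or> y = partner b'" using same_half by metis
        then have "y = b" using False partner_partner unfolding b'_def by auto
        then show ?thesis unfolding D_iff by simp
      qed
      then show ?thesis using y by blast
    qed simp
  qed
  have "finite {x. (b, x) \<in> D \<and> (x, 2 * m) \<in> D}" using b unfolding finite_below_def by blast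
  then have "finite {x. (b', x) \<in> D \<and> (x, 2 * m) \<in> D}" using sub by (meson finite_insert finite_subset)
  then show ?thesis using b'd b'ne unfolding finite_below_def D_iff b'_def by blast
qed

lemma elem_parity: "even (elem_finpart D n) \<longleftrightarrow> even n"
proof -
  obtain m where "n = 2 * m \<or> n = Suc (2 * m)" by (metis evenE oddE add.commute plus_1_eq_Suc)
  define E where "E = finite_below D (2 * m) - {2 * m}"
  have Ee: "even (card E)" by (rule card_partner_even) (use finite_below_even_partner in \<open>simp add: E_def\<close>)
  have in2m: "2 * m \<in> finite_below D (2 * m)"
  proof -
    have "{x. (2 * m, x) \<in> D \<and> (x, 2 * m) \<in> D} = {2 * m}" unfolding D_iff using dless_asym by auto
    then show ?thesis unfolding finite_below_def D_iff by simp
  qed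
  have fE: "finite E" unfolding E_def using finite_below_finite by simp
  have c1: "card (finite_below D (2 * m)) = Suc (card E)"
    using in2m fE unfolding E_def by (metis card.insert_remove finite_Diff2 finite_below_finite insert_absorb Diff_empty finite.emptyI card_Suc_Diff1)
  have c2: "card (finite_below D (Suc (2 * m))) = Suc (Suc (card E))"
    using c1 odd_notin_finite_below finite_below_finite by (simp add: finite_below_odd)
  show ?thesis
    using \<open>n = 2 * m \<or> n = Suc (2 * m)\<close> c1 c2 Ee unfolding elem_finpart_finite_below by auto
qed

lemma type_parity: "even (type_finpart D)"
proof -
  have FD: "Field D = UNIV" unfolding Field_def dbl_rel_def by auto
  have up: "finite {x. (partner b, x) \<in> D} \<longleftrightarrow> finite {x. (b, x) \<in> D}" for b
  proof -
    have key: "{x. (2 * m, x) \<in> D} = insert (2 * m) {x. (Suc (2 * m), x) \<in> D}" for m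
    proof safe
      fix x assume "(2 * m, x) \<in> D" "x \<noteq> 2 * m"
      then have "dless (2 * m) x" unfolding D_iff by blast
      then consider "lt m (x div 2)" | "x div 2 = m" "0 < x mod 2" unfolding dbl_less_def by auto
      then show "(Suc (2 * m), x) \<in> D"
      proof cases
        case 1 then show ?thesis unfolding D_iff dbl_less_def by simp
      next
        case 2 then have "x = Suc (2 * m)" by (metis div_mult_mod_eq mult.commute less_one not_less mod_less_divisor zero_less_numeral Suc_eq_plus1 le_less_Suc_eq mod2_gr_0 add.commute)
        then show ?thesis unfolding D_iff by simp
      qed
    next
      fix x assume "(Suc (2 * m), x) \<in> D"
      then show "(2 * m, x) \<in> D" using D_trans[of "2 * m" "Suc (2 * m)" x] dless_even_odd unfolding D_iff by blast
    qed (simp add: D_iff)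
    obtain m where "b = 2 * m \<or> b = Suc (2 * m)" by (metis evenE oddE add.commute plus_1_eq_Suc)
    then show ?thesis using key[of m] unfolding partner_def by auto
  qed
  show ?thesis unfolding type_finpart_def FD
    by (rule card_partner_even) (use up in simp)
qed

lemma parity_differs_D: "parity_differs D n \<longleftrightarrow> odd n"
  unfolding parity_differs_def using elem_parity type_parity by auto

end


section \<open>The tree of nested basic sets\<close>

text \<open>The levels \<open>U 0, V 0, U 1, V 1, \<dots>\<close> are interleaved; a node of
  depth \<open>k + 1\<close> of the tree is a sequence of basic sets \<open>B\<^sub>0 \<lless> B\<^sub>1 \<lless> \<dots> \<lless> B\<^sub>k\<close> with \<open>B\<^sub>k\<close> inside
  level \<open>k\<close>, each entry carrying the witnesses for these facts, so that the tree is decidable.\<close>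

definition level_basic :: "(nat \<Rightarrow> nat \<Rightarrow> nat \<Rightarrow> bool) \<Rightarrow> (nat \<Rightarrow> nat \<Rightarrow> nat \<Rightarrow> bool) \<Rightarrow> nat \<Rightarrow> nat \<Rightarrow> nat \<Rightarrow> bool" where
  "level_basic RU RV k t i \<longleftrightarrow> (k mod 2 = 0 \<and> RU t (k div 2) i) \<or> (k mod 2 \<noteq> 0 \<and> RV t (k div 2) i)"

text \<open>A node entry is the Cantor code of the basic index \<open>j\<close> of \<open>B = Ob j\<close> together with
  four witnesses: for \<open>B\<^sub>p\<^sub>r\<^sub>e\<^sub>v \<lless> B\<close>, for a basic set \<open>Ob i0\<close> of the current level, and for \<open>Ob i0 \<lless> B\<close>.\<close>
definition node_basic :: "nat \<Rightarrow> nat" where "node_basic e = unpair_fst e"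
definition wit_nest :: "nat \<Rightarrow> nat" where "wit_nest e = unpair_fst (unpair_snd e)"
definition wit_level :: "nat \<Rightarrow> nat" where "wit_level e = unpair_fst (unpair_snd (unpair_snd e))"
definition level_index :: "nat \<Rightarrow> nat" where "level_index e = unpair_fst (unpair_snd (unpair_snd (unpair_snd e)))"
definition wit_inside :: "nat \<Rightarrow> nat" where "wit_inside e = unpair_snd (unpair_snd (unpair_snd (unpair_snd e)))"

definition mk_node :: "nat \<Rightarrow> nat \<Rightarrow> nat \<Rightarrow> nat \<Rightarrow> nat \<Rightarrow> nat" where
  "mk_node j t1 t2 i0 t3 = prod_encode (j, prod_encode (t1, prod_encode (t2, prod_encode (i0, t3))))"

lemma mk_node_simps[simp]: "node_basic (mk_node j t1 t2 i0 t3) = j" "wit_nest (mk_node j t1 t2 i0 t3) = t1"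
  "wit_level (mk_node j t1 t2 i0 t3) = t2" "level_index (mk_node j t1 t2 i0 t3) = i0" "wit_inside (mk_node j t1 t2 i0 t3) = t3"
  by (simp_all add: mk_node_def node_basic_def wit_nest_def wit_level_def level_index_def wit_inside_def)

definition node_ok :: "(nat \<Rightarrow> nat \<Rightarrow> nat \<Rightarrow> bool) \<Rightarrow> (nat \<Rightarrow> nat \<Rightarrow> nat \<Rightarrow> bool) \<Rightarrow> (nat \<Rightarrow> nat \<Rightarrow> nat \<Rightarrow> bool)
   \<Rightarrow> nat \<Rightarrow> nat \<Rightarrow> nat \<Rightarrow> bool" where
  "node_ok RU RV RL k e prev \<longleftrightarrow> level_basic RU RV k (wit_level e) (level_index e) \<and> RL (wit_inside e) (level_index e) (node_basic e) \<and>
     (0 < k \<longrightarrow> RL (wit_nest e) (node_basic prev) (node_basic e))"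

definition good_seq :: "(nat \<Rightarrow> nat \<Rightarrow> nat \<Rightarrow> bool) \<Rightarrow> (nat \<Rightarrow> nat \<Rightarrow> nat \<Rightarrow> bool) \<Rightarrow> (nat \<Rightarrow> nat \<Rightarrow> nat \<Rightarrow> bool)
   \<Rightarrow> nat list \<Rightarrow> bool" where
  "good_seq RU RV RL s \<longleftrightarrow> (\<forall>k<length s. node_ok RU RV RL k (s ! k) (s ! (k - 1)))"

lemma good_seq_take: "good_seq RU RV RL s \<Longrightarrow> good_seq RU RV RL (take n s)"
  unfolding good_seq_def by auto

lemma good_seq_snoc: "good_seq RU RV RL s \<Longrightarrow> node_ok RU RV RL (length s) e (s ! (length s - 1)) \<Longrightarrow> good_seq RU RV RL (s @ [e])"
  unfolding good_seq_def node_ok_def by (auto simp: nth_append less_Suc_eq)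

locale delta_tree =
  fixes Ob :: "nat \<Rightarrow> 'a::topological_space set" and ll :: "'a set \<Rightarrow> 'a set \<Rightarrow> bool"
    and RU RV RL :: "nat \<Rightarrow> nat \<Rightarrow> nat \<Rightarrow> bool" and U V :: "nat \<Rightarrow> 'a set" and A :: "'a set"
  assumes basis: "topological_basis (range Ob)"
    and ar: "approximation_relation (range Ob) ll"
    and RL: "\<And>i j. ll (Ob i) (Ob j) \<longleftrightarrow> (\<exists>t. RL t i j)"
    and U: "\<And>n. U n = (\<Union>i\<in>{i. \<exists>t. RU t n i}. Ob i)"
    and V: "\<And>n. V n = (\<Union>i\<in>{i. \<exists>t. RV t n i}. Ob i)"
    and AU: "A = (\<Inter>n. U n)" and AV: "- A = (\<Inter>n. V n)"
begin

abbreviation "tree \<equiv> good_seq RU RV RL"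

definition level_set :: "nat \<Rightarrow> 'a set" where
  "level_set k = (if k mod 2 = 0 then U (k div 2) else V (k div 2))"

definition last_set :: "nat list \<Rightarrow> 'a set" where
  "last_set s = (if s = [] then UNIV else Ob (node_basic (last s)))"

lemma ll_sub: "ll (Ob i) (Ob j) \<Longrightarrow> Ob j \<subseteq> Ob i"
  using conjunct1[OF ar[unfolded approximation_relation_def]] by blast

lemma ll_mono: "Ob i \<subseteq> Ob k \<Longrightarrow> ll (Ob i) (Ob j) \<Longrightarrow> ll (Ob k) (Ob j)"
  using conjunct1[OF conjunct2[OF ar[unfolded approximation_relation_def]]] by blast

lemma ll_ex: "x \<in> Ob i \<Longrightarrow> \<exists>j. x \<in> Ob j \<and> ll (Ob i) (Ob j)"
  using conjunct1[OF conjunct2[OF conjunct2[OF ar[unfolded approximation_relation_def]]]] by blast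

lemma ll_chain: "(\<And>k. ll (Ob (g k)) (Ob (g (Suc k)))) \<Longrightarrow> (\<Inter>k. Ob (g k)) \<noteq> {}"
  using conjunct2[OF conjunct2[OF conjunct2[OF ar[unfolded approximation_relation_def]]],
      rule_format, of "\<lambda>k. Ob (g k)"] by auto

lemma node_ok_sub: "node_ok RU RV RL k e prev \<Longrightarrow> Ob (node_basic e) \<subseteq> level_set k"
proof -
  assume ok: "node_ok RU RV RL k e prev"
  then have "ll (Ob (level_index e)) (Ob (node_basic e))" unfolding node_ok_def using RL by blast
  then have sub: "Ob (node_basic e) \<subseteq> Ob (level_index e)" by (rule ll_sub)
  have "Ob (level_index e) \<subseteq> level_set k"
    using ok unfolding node_ok_def level_basic_def level_set_def U V by auto
  then show ?thesis using sub by blast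
qed

lemma node_ok_nest: "node_ok RU RV RL k e prev \<Longrightarrow> 0 < k \<Longrightarrow> ll (Ob (node_basic prev)) (Ob (node_basic e))"
  unfolding node_ok_def using RL by blast

lemma good_seq_nested:
  assumes c: "tree s" and k: "k < length s" and x: "x \<in> Ob (node_basic (last s))"
  shows "x \<in> Ob (node_basic (s ! k))"
proof -
  have "x \<in> Ob (node_basic (s ! (length s - 1 - d)))" if "d < length s" for d
    using that
  proof (induction d)
    case 0 then show ?case using x by (simp add: last_conv_nth)
  next
    case (Suc d)
    define k' where "k' = length s - 1 - d"
    have k': "k' < length s" "0 < k'" "length s - 1 - Suc d = k' - 1" using Suc.prems unfolding k'_def by auto
    have "node_ok RU RV RL k' (s ! k') (s ! (k' - 1))" using c k' unfolding good_seq_def by blast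
    then have "Ob (node_basic (s ! k')) \<subseteq> Ob (node_basic (s ! (k' - 1)))" using node_ok_nest ll_sub k' by blast
    then show ?case using Suc.IH Suc.prems k' unfolding k'_def by auto
  qed
  from this[of "length s - 1 - k"] k show ?thesis by simp
qed

lemma good_seq_levels:
  assumes c: "tree s" and x: "x \<in> last_set s" and k: "k < length s"
  shows "x \<in> level_set k"
proof -
  have "s \<noteq> []" using k by auto
  then have "x \<in> Ob (node_basic (s ! k))" using good_seq_nested[OF c k] x unfolding last_set_def by simp
  moreover have "node_ok RU RV RL k (s ! k) (s ! (k - 1))" using c k unfolding good_seq_def by blast
  ultimately show ?thesis using node_ok_sub by blast
qed

text \<open>Conversely a point of the last set of a node that also lies in the next level lies in
  the last set of a child: choose a basic neighbourhood inside both and approximate it.\<close>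
lemma Ob_open: "open (Ob i)"
  using basis topological_basis_open(1) by blast

lemma good_seq_extend:
  assumes c: "tree s" and x: "x \<in> last_set s" and x_level: "x \<in> level_set (length s)"
  shows "\<exists>e. tree (s @ [e]) \<and> x \<in> Ob (node_basic e)"
proof -
  define k where "k = length s"
  obtain t2 i0 where lv: "level_basic RU RV k t2 i0" and xi0: "x \<in> Ob i0"
    using x_level unfolding level_set_def level_basic_def U V k_def by (auto split: if_splits)
  have "open (last_set s \<inter> Ob i0)" unfolding last_set_def using Ob_open by auto
  then obtain b where "b \<in> range Ob" "x \<in> b" "b \<subseteq> last_set s \<inter> Ob i0"
    using topological_basisE[OF basis] x xi0 by (metis IntI)
  then obtain i where i: "x \<in> Ob i" "Ob i \<subseteq> last_set s" "Ob i \<subseteq> Ob i0" by blast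
  obtain j where j: "x \<in> Ob j" "ll (Ob i) (Ob j)" using ll_ex[OF i(1)] by blast
  have "ll (Ob i0) (Ob j)" using ll_mono[OF i(3) j(2)] .
  then obtain t3 where t3: "RL t3 i0 j" using RL by blast
  obtain t1 where t1: "0 < k \<Longrightarrow> RL t1 (node_basic (s ! (k - 1))) j"
  proof (cases "0 < k")
    case True
    then have "s \<noteq> []" unfolding k_def by auto
    then have "last_set s = Ob (node_basic (s ! (k - 1)))" unfolding last_set_def k_def by (simp add: last_conv_nth)
    then have "ll (Ob (node_basic (s ! (k - 1)))) (Ob j)" using ll_mono[OF _ j(2)] i(2) by simp
    then show ?thesis using RL that by blast
  qed auto
  define e where "e = mk_node j t1 t2 i0 t3"
  have "node_ok RU RV RL k e (s ! (k - 1))" unfolding node_ok_def e_def using lv t3 t1 by simp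
  then have "tree (s @ [e])" using good_seq_snoc[OF c] unfolding k_def by simp
  then show ?thesis using j(1) unfolding e_def by auto
qed

text \<open>The tree has no infinite branch: along a branch the basic sets form a \<open>\<lless>\<close>-chain,
  whose intersection is nonempty by property (4); a common point would lie in every
  level, hence in both \<open>A\<close> and \<open>-A\<close>.\<close>
lemma no_infinite_branch: "\<exists>n. \<not> tree (map g [0..<n])"
proof (rule ccontr)
  assume "\<nexists>n. \<not> tree (map g [0..<n])"
  then have "tree (map g [0..<Suc k])" for k by blast
  then have ok: "node_ok RU RV RL k (g k) (g (k - 1))" for k
    unfolding good_seq_def by (auto simp del: upt_Suc)
  have "ll (Ob (node_basic (g k))) (Ob (node_basic (g (Suc k))))" for k
    using node_ok_nest[OF ok[of "Suc k"]] by simp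
  then obtain x where x: "x \<in> (\<Inter>k. Ob (node_basic (g k)))"
    using ll_chain[of "\<lambda>k. node_basic (g k)"] by blast
  have "x \<in> level_set k" for k using x node_ok_sub[OF ok[of k]] by blast
  then have "x \<in> U n" "x \<in> V n" for n
    using level_set_def[of "2 * n"] level_set_def[of "Suc (2 * n)"] by auto
  then show False using AU AV by blast
qed

lemma wf_tree: "wf (child_rel tree)"
  by (rule wf_child_rel[OF good_seq_take no_infinite_branch])

sublocale code_less: strict_wo "code_less tree"
proof
  show "\<not> code_less tree a a" for a by (rule code_less_irrefl)
  show "code_less tree a c" if "code_less tree a b" "code_less tree b c" for a b c using code_less_trans that by blast
  show "code_less tree a b \<or> code_less tree b a" if "a \<noteq> b" for a b using code_less_total that by blast
  show "wf {(a, b). code_less tree a b}" by (rule code_less_wf[OF good_seq_take wf_tree])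
qed

sublocale dbl: strict_wo "dbl_less (code_less tree)"
  by (rule strict_wo_dbl_less) (rule code_less.strict_wo_axioms)

definition tree_set :: "nat \<Rightarrow> 'a set" where
  "tree_set n = (if valid_code tree (n div 2) \<and> n mod 2 = unpair_fst (n div 2) mod 2 then last_set (decode_list (n div 2)) else {})"

text \<open>It exists because
  no point lies in all levels, and \<open>x \<in> A\<close> iff its depth is odd, i.e.\ \<open>x\<close> leaves
  the levels at a \<open>V\<close>-level.\<close>
definition depth :: "'a \<Rightarrow> nat" where "depth x = (LEAST k. x \<notin> level_set k)"

lemma depth_ex: "\<exists>k. x \<notin> level_set k"
proof (cases "x \<in> A")
  case True
  then have "x \<notin> (\<Inter>n. V n)" using AV by blast
  then obtain n where "x \<notin> V n" by blast
  then have "x \<notin> level_set (Suc (2 * n))" unfolding level_set_def by simp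
  then show ?thesis by blast
next
  case False
  then have "x \<notin> (\<Inter>n. U n)" using AU by blast
  then obtain n where "x \<notin> U n" by blast
  then have "x \<notin> level_set (2 * n)" unfolding level_set_def by simp
  then show ?thesis by blast
qed

lemma depth_notin: "x \<notin> level_set (depth x)"
  unfolding depth_def using depth_ex by (rule LeastI_ex)

lemma below_depth: "k < depth x \<Longrightarrow> x \<in> level_set k"
  unfolding depth_def using not_less_Least by blast

lemma depth_parity: "x \<in> A \<longleftrightarrow> odd (depth x)"
proof
  assume "x \<in> A"
  then have "x \<in> U n" for n using AU by blast
  then show "odd (depth x)" using depth_notin[of x] unfolding level_set_def by (auto split: if_splits)
next
  assume o: "odd (depth x)"
  show "x \<in> A"
  proof (rule ccontr)
    assume "x \<notin> A"
    then have "x \<in> - A" by simp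
    then have "x \<in> V n" for n using AV by blast
    then show False using depth_notin[of x] o unfolding level_set_def by (auto split: if_splits)
  qed
qed

lemma valid_code_root: "valid_code tree (encode_list [])"
  unfolding valid_code_def using canonical_encode_list by (simp add: good_seq_def)

text \<open>A child of the node at an active position \<open>p\<close> has an active position before \<open>p\<close>,
  because children precede their parents in the Kleene--Brouwer order.\<close>
lemma child_position:
  assumes valid: "valid_code tree (p div 2)" and child: "tree (decode_list (p div 2) @ [e])"
  defines "p' \<equiv> 2 * encode_list (decode_list (p div 2) @ [e]) + Suc (length (decode_list (p div 2))) mod 2"
  shows "tree_set p' = Ob (node_basic e)" and "dbl_less (code_less tree) p' p"
proof -
  let ?s = "decode_list (p div 2) @ [e]"
  have p': "p' div 2 = encode_list ?s" "p' mod 2 = length ?s mod 2" unfolding p'_def by auto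
  have valid': "valid_code tree (encode_list ?s)"
    unfolding valid_code_def using canonical_encode_list child by simp
  then show "tree_set p' = Ob (node_basic e)"
    unfolding tree_set_def p' last_set_def by simp
  have "kb_less ?s (decode_list (p div 2))" by (rule kb_less_ext) auto
  then have "code_less tree (encode_list ?s) (p div 2)"
    unfolding code_less_def using valid' valid by simp
  then show "dbl_less (code_less tree) p' p" unfolding dbl_less_def p' by simp
qed

text \<open>If \<open>p0\<close> is the least position whose set contains \<open>x\<close>, then the node at \<open>p0\<close> has
  length \<open>depth x\<close>: it is not longer, since its last set lies in all levels below its
  length, and not shorter, since otherwise a child would contain \<open>x\<close> at an earlier position.\<close>
lemma least_node_length:
  assumes p0: "x \<in> tree_set p0" and least: "x \<notin> below_union dbl.R tree_set p0"
  shows "length (decode_list (p0 div 2)) = depth x"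
proof -
  let ?s = "decode_list (p0 div 2)"
  have valid: "valid_code tree (p0 div 2)" and x: "x \<in> last_set ?s"
    using p0 unfolding tree_set_def by (auto split: if_splits)
  have node: "tree ?s" using valid unfolding valid_code_def by simp
  have "\<not> depth x < length ?s" using good_seq_levels[OF node x] depth_notin by blast
  moreover have "\<not> length ?s < depth x"
  proof
    assume "length ?s < depth x"
    then obtain e where e: "tree (?s @ [e])" "x \<in> Ob (node_basic e)"
      using good_seq_extend[OF node x below_depth] by blast
    define p' where "p' = 2 * encode_list (?s @ [e]) + Suc (length ?s) mod 2"
    have "x \<in> tree_set p'" "dbl_less (code_less tree) p' p0"
      using child_position[OF valid e(1)] e(2) unfolding p'_def by auto
    moreover have "(p', p0) \<in> dbl.R" "p' \<noteq> p0"
      using \<open>dbl_less (code_less tree) p' p0\<close> dbl.irr unfolding dbl.R_def by auto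
    ultimately show False using least unfolding below_union_def by blast
  qed
  ultimately show ?thesis by simp
qed

text \<open>The least position \<open>p0\<close> containing
  \<open>x\<close> has the parity of its node's length, which is \<open>depth x\<close>; and \<open>x \<in> A\<close> iff that is odd.\<close>
lemma A_diff_comb: "A = diff_comb dbl.R {p. odd p} tree_set"
proof (intro set_eqI)
  fix x
  have "x \<in> tree_set (2 * encode_list [])"
    unfolding tree_set_def using valid_code_root by (simp add: last_set_def)
  then obtain p0 where p0: "x \<in> tree_set p0" "x \<notin> below_union dbl.R tree_set p0"
    using least_index_exists[OF dbl.WO dbl.Field_R, of _ x tree_set] by blast
  have "p0 mod 2 = length (decode_list (p0 div 2)) mod 2"
    using p0(1) unfolding tree_set_def by (auto split: if_splits)
  then have "x \<in> A \<longleftrightarrow> odd p0"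
    unfolding depth_parity least_node_length[OF p0] by (simp add: odd_iff_mod_2_eq_one)
  moreover have "x \<in> diff_comb dbl.R {p. odd p} tree_set \<longleftrightarrow> odd p0"
    using diff_comb_least_index[OF dbl.WO dbl.Field_R _ _ p0] by simp
  ultimately show "x \<in> A \<longleftrightarrow> x \<in> diff_comb dbl.R {p. odd p} tree_set" by simp
qed

end

section \<open>Computability of the tree and of its order\<close>

lemma recursive_tail_iter: "recursive n a \<Longrightarrow> recursive n b \<Longrightarrow> recursive n (\<lambda>xs. tail_iter (a xs) (b xs))"
  unfolding tail_iter_def by (rule recursive_iter[OF recursive_unpair_snd[OF recursive_proj]]) auto

lemma recursive_code_nth: "recursive n a \<Longrightarrow> recursive n b \<Longrightarrow> recursive n (\<lambda>xs. code_nth (a xs) (b xs))"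
  unfolding code_nth_def by (intro recursive_unpair_fst recursive_tail_iter)

lemma recursive_node_basic: "recursive n a \<Longrightarrow> recursive n (\<lambda>xs. node_basic (a xs))" unfolding node_basic_def by (rule recursive_unpair_fst)
lemma recursive_wit_nest: "recursive n a \<Longrightarrow> recursive n (\<lambda>xs. wit_nest (a xs))" unfolding wit_nest_def by (intro recursive_unpair_fst recursive_unpair_snd)
lemma recursive_wit_level: "recursive n a \<Longrightarrow> recursive n (\<lambda>xs. wit_level (a xs))" unfolding wit_level_def by (intro recursive_unpair_fst recursive_unpair_snd)
lemma recursive_level_index: "recursive n a \<Longrightarrow> recursive n (\<lambda>xs. level_index (a xs))" unfolding level_index_def by (intro recursive_unpair_fst recursive_unpair_snd)
lemma recursive_wit_inside: "recursive n a \<Longrightarrow> recursive n (\<lambda>xs. wit_inside (a xs))" unfolding wit_inside_def by (intro recursive_unpair_fst recursive_unpair_snd)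

lemma decidable_ball2: "decidable 2 Q \<Longrightarrow> recursive 1 b \<Longrightarrow> decidable 1 (\<lambda>xs. \<forall>i<b xs. Q (i # xs))"
  using decidable_ball[of 1 Q b] by (simp add: numeral_2_eq_2)

lemma decidable_ball3: "decidable 3 Q \<Longrightarrow> recursive 2 b \<Longrightarrow> decidable 2 (\<lambda>xs. \<forall>i<b xs. Q (i # xs))"
  using decidable_ball[of 2 Q b] by (simp add: numeral_3_eq_3 numeral_2_eq_2)

lemma decidable_ball4: "decidable 4 Q \<Longrightarrow> recursive 3 b \<Longrightarrow> decidable 3 (\<lambda>xs. \<forall>i<b xs. Q (i # xs))"
  using decidable_ball[of 3 Q b] by (simp add: numeral_3_eq_3 eval_nat_numeral)

lemma decidable_bex3: "decidable 3 Q \<Longrightarrow> recursive 2 b \<Longrightarrow> decidable 2 (\<lambda>xs. \<exists>i<b xs. Q (i # xs))"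
  using decidable_bex[of 2 Q b] by (simp add: numeral_3_eq_3 numeral_2_eq_2)

context
  fixes RU RV RL :: "nat \<Rightarrow> nat \<Rightarrow> nat \<Rightarrow> bool"
  assumes dU: "decidable 3 (\<lambda>zs. RU (zs ! 0) (zs ! 1) (zs ! 2))"
    and dV: "decidable 3 (\<lambda>zs. RV (zs ! 0) (zs ! 1) (zs ! 2))"
    and dL: "decidable 3 (\<lambda>zs. RL (zs ! 0) (zs ! 1) (zs ! 2))"
begin

lemma decidable_node_ok: "decidable 2 (\<lambda>zs. node_ok RU RV RL (zs ! 0) (code_nth (zs ! 0) (unpair_snd (zs ! 1))) (code_nth (zs ! 0 - 1) (unpair_snd (zs ! 1))))"
  unfolding node_ok_def level_basic_def
  by (intro decidable_conj decidable_disj decidable_imp decidable_not decidable_eq decidable_less decidable_comp3[OF dU] decidable_comp3[OF dV] decidable_comp3[OF dL]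
      recursive_node_basic recursive_wit_nest recursive_wit_level recursive_level_index recursive_wit_inside recursive_code_nth recursive_unpair_snd recursive_mod2 recursive_div2 recursive_sub recursive_proj recursive_const; simp)

lemma valid_code_code_nth: "valid_code (good_seq RU RV RL) m \<longleftrightarrow> tail_iter (unpair_fst m) (unpair_snd m) = 0 \<and>
   (\<forall>k<unpair_fst m. node_ok RU RV RL k (code_nth k (unpair_snd m)) (code_nth (k - 1) (unpair_snd m)))"
  unfolding valid_code_def canonical_def good_seq_def by (auto simp: nth_decode_list)

lemma decidable_valid_code: "decidable 1 (\<lambda>zs. valid_code (good_seq RU RV RL) (zs ! 0))"
proof -
  have b: "decidable 1 (\<lambda>xs. \<forall>i<unpair_fst (xs ! 0). (\<lambda>zs. node_ok RU RV RL (zs ! 0) (code_nth (zs ! 0) (unpair_snd (zs ! 1))) (code_nth (zs ! 0 - 1) (unpair_snd (zs ! 1)))) (i # xs))"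
    by (rule decidable_ball2[OF decidable_node_ok]) (intro recursive_unpair_fst recursive_proj; simp)
  have "decidable 1 (\<lambda>xs. tail_iter (unpair_fst (xs ! 0)) (unpair_snd (xs ! 0)) = 0)"
    by (intro decidable_eq recursive_tail_iter recursive_unpair_fst recursive_unpair_snd recursive_proj recursive_const; simp)
  from decidable_conj[OF this b] show ?thesis
    by (rule decidable_cong) (simp add: valid_code_code_nth)
qed

end

text \<open>The Kleene--Brouwer order of decoded lists, with all quantifiers bounded.\<close>
lemma kb_less_code_nth: "kb_less (decode_list m) (decode_list m') \<longleftrightarrow>
   (unpair_fst m' < unpair_fst m \<and> (\<forall>k<unpair_fst m'. code_nth k (unpair_snd m) = code_nth k (unpair_snd m'))) \<or>
   (\<exists>i<unpair_fst m - (unpair_fst m - unpair_fst m'). (\<forall>k<i. code_nth k (unpair_snd m) = code_nth k (unpair_snd m')) \<and> code_nth i (unpair_snd m) < code_nth i (unpair_snd m'))"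
  unfolding kb_less_def by (auto simp: nth_decode_list min_def)

lemma decidable_kb_less: "decidable 2 (\<lambda>zs. kb_less (decode_list (zs ! 0)) (decode_list (zs ! 1)))"
proof -
  have e4: "decidable 4 (\<lambda>ys. code_nth (ys ! 0) (unpair_snd (ys ! 2)) = code_nth (ys ! 0) (unpair_snd (ys ! 3)))"
    by (intro decidable_eq recursive_code_nth recursive_unpair_snd recursive_proj; simp)
  have e3: "decidable 3 (\<lambda>xs. \<forall>k<xs ! 0. (\<lambda>ys. code_nth (ys ! 0) (unpair_snd (ys ! 2)) = code_nth (ys ! 0) (unpair_snd (ys ! 3))) (k # xs))"
    by (rule decidable_ball4[OF e4]) (rule recursive_proj, simp)
  have e3': "decidable 3 (\<lambda>xs. (\<forall>k<xs ! 0. (\<lambda>ys. code_nth (ys ! 0) (unpair_snd (ys ! 2)) = code_nth (ys ! 0) (unpair_snd (ys ! 3))) (k # xs))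
       \<and> code_nth (xs ! 0) (unpair_snd (xs ! 1)) < code_nth (xs ! 0) (unpair_snd (xs ! 2)))"
    by (intro decidable_conj e3 decidable_less recursive_code_nth recursive_unpair_snd recursive_proj; simp)
  have part2: "decidable 2 (\<lambda>zs. \<exists>i<unpair_fst (zs ! 0) - (unpair_fst (zs ! 0) - unpair_fst (zs ! 1)). (\<lambda>xs. (\<forall>k<xs ! 0. (\<lambda>ys. code_nth (ys ! 0) (unpair_snd (ys ! 2)) = code_nth (ys ! 0) (unpair_snd (ys ! 3))) (k # xs))
       \<and> code_nth (xs ! 0) (unpair_snd (xs ! 1)) < code_nth (xs ! 0) (unpair_snd (xs ! 2))) (i # zs))"
    by (rule decidable_bex3[OF e3']) (intro recursive_sub recursive_unpair_fst recursive_proj; simp)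
  have e3b: "decidable 3 (\<lambda>ys. code_nth (ys ! 0) (unpair_snd (ys ! 1)) = code_nth (ys ! 0) (unpair_snd (ys ! 2)))"
    by (intro decidable_eq recursive_code_nth recursive_unpair_snd recursive_proj; simp)
  have part1: "decidable 2 (\<lambda>zs. unpair_fst (zs ! 1) < unpair_fst (zs ! 0) \<and> (\<forall>k<unpair_fst (zs ! 1). (\<lambda>ys. code_nth (ys ! 0) (unpair_snd (ys ! 1)) = code_nth (ys ! 0) (unpair_snd (ys ! 2))) (k # zs)))"
    by (intro decidable_conj decidable_less recursive_unpair_fst recursive_proj decidable_ball3[OF e3b]; simp)
  from decidable_disj[OF part1 part2] show ?thesis
    by (rule decidable_cong) (simp add: kb_less_code_nth)
qed

definition tree_set_rel :: "(nat list \<Rightarrow> bool) \<Rightarrow> nat \<Rightarrow> nat \<Rightarrow> nat \<Rightarrow> bool" where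
  "tree_set_rel tree t n i \<longleftrightarrow> valid_code tree (n div 2) \<and> n mod 2 = unpair_fst (n div 2) mod 2 \<and>
     (unpair_fst (n div 2) = 0 \<or> i = node_basic (code_nth (unpair_fst (n div 2) - 1) (unpair_snd (n div 2))))"

context delta_tree
begin

lemma tree_set_eq: "tree_set n = (\<Union>i\<in>{i. \<exists>t. tree_set_rel tree t n i}. Ob i)"
proof (cases "valid_code tree (n div 2) \<and> n mod 2 = unpair_fst (n div 2) mod 2")
  case False
  then show ?thesis unfolding tree_set_def tree_set_rel_def by auto
next
  case True
  show ?thesis
  proof (cases "unpair_fst (n div 2) = 0")
    case z: True
    then have "decode_list (n div 2) = []" by (simp add: decode_list_def)
    then show ?thesis using True z basis_cover[OF basis] unfolding tree_set_def tree_set_rel_def last_set_def by auto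
  next
    case nz: False
    have ne: "decode_list (n div 2) \<noteq> []" using nz by (metis length_decode_list list.size(3))
    have "last (decode_list (n div 2)) = decode_list (n div 2) ! (length (decode_list (n div 2)) - 1)" by (rule last_conv_nth[OF ne])
    also have "\<dots> = code_nth (unpair_fst (n div 2) - 1) (unpair_snd (n div 2))" using nz by (simp add: nth_decode_list)
    finally have "decode_list (n div 2) \<noteq> [] \<and> last (decode_list (n div 2)) = code_nth (unpair_fst (n div 2) - 1) (unpair_snd (n div 2))" using ne by simp
    then show ?thesis using True nz unfolding tree_set_def tree_set_rel_def last_set_def by auto
  qed
qed

lemma dbl_rel_R: "dbl.R = dbl_rel (code_less tree)"
  unfolding dbl.R_def dbl_rel_def by simp

end

lemma decidable_tree_set_rel:
  assumes dU: "decidable 3 (\<lambda>zs. RU (zs ! 0) (zs ! 1) (zs ! 2))"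
    and dV: "decidable 3 (\<lambda>zs. RV (zs ! 0) (zs ! 1) (zs ! 2))"
    and dL: "decidable 3 (\<lambda>zs. RL (zs ! 0) (zs ! 1) (zs ! 2))"
  shows "decidable 3 (\<lambda>zs. tree_set_rel (good_seq RU RV RL) (zs ! 0) (zs ! 1) (zs ! 2))"
  unfolding tree_set_rel_def
  by (intro decidable_conj decidable_disj decidable_eq decidable_comp1[OF decidable_valid_code[OF dU dV dL]] recursive_mod2 recursive_div2 recursive_unpair_fst recursive_unpair_snd
      recursive_node_basic recursive_code_nth recursive_sub recursive_proj recursive_const; simp)

lemma decidable_dbl_rel:
  assumes dU: "decidable 3 (\<lambda>zs. RU (zs ! 0) (zs ! 1) (zs ! 2))"
    and dV: "decidable 3 (\<lambda>zs. RV (zs ! 0) (zs ! 1) (zs ! 2))"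
    and dL: "decidable 3 (\<lambda>zs. RL (zs ! 0) (zs ! 1) (zs ! 2))"
  shows "decidable 2 (\<lambda>zs. (zs ! 0, zs ! 1) \<in> dbl_rel (code_less (good_seq RU RV RL)))"
  unfolding dbl_rel_def dbl_less_def code_less_def
  by (simp only: mem_Collect_eq case_prod_conv)
    (intro decidable_conj decidable_disj decidable_not decidable_eq decidable_less decidable_comp1[OF decidable_valid_code[OF dU dV dL]] decidable_comp2[OF decidable_kb_less]
      recursive_mod2 recursive_div2 recursive_proj recursive_const; simp)

lemma computable_odd: "computable_set {n. odd n}"
proof (rule computable_set_intro)
  have "decidable 1 (\<lambda>zs. zs ! 0 mod 2 = 1)" by (intro decidable_eq recursive_mod2 recursive_proj recursive_const; simp)
  then show "decidable 1 (\<lambda>zs. zs ! 0 \<in> {n. odd n})" by (rule decidable_cong) (simp add: odd_iff_mod_2_eq_one)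
qed

locale effective_delta_tree = delta_tree +
  assumes dec_U: "decidable 3 (\<lambda>zs. RU (zs ! 0) (zs ! 1) (zs ! 2))"
    and dec_V: "decidable 3 (\<lambda>zs. RV (zs ! 0) (zs ! 1) (zs ! 2))"
    and dec_L: "decidable 3 (\<lambda>zs. RL (zs ! 0) (zs ! 1) (zs ! 2))"
begin

text \<open>The first inclusion for a single set: \<open>A \<in> D\<^sub>\<alpha>(E)\<close> for the order type \<open>\<alpha>\<close> of the doubled
  Kleene--Brouwer order, witnessed by the identity enumeration and the sets \<open>tree_set\<close>.\<close>
lemma A_Dunion: "A \<in> Dunion Ob"
proof -
  define alpha where "alpha = dbl_rel (code_less tree)"
  have WO: "Well_order alpha" and FA: "Field alpha = UNIV"
    unfolding alpha_def dbl_rel_R[symmetric] by (rule dbl.WO, rule dbl.Field_R)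
  have cr: "computable_rel alpha"
    unfolding alpha_def by (rule computable_rel_intro[OF decidable_dbl_rel[OF dec_U dec_V dec_L]])
  have odd: "{n \<in> UNIV. parity_differs alpha (id n)} = {n. odd n}"
    unfolding alpha_def using code_less.parity_differs_D by simp
  have X: "unif_Sigma01 Ob tree_set"
    by (rule unif_intro[OF decidable_tree_set_rel[OF dec_U dec_V dec_L]]) (rule tree_set_eq)
  have "A = (\<Union>p\<in>{p \<in> UNIV. parity_differs alpha (id p)}.
             tree_set p - (\<Union>q\<in>{q \<in> UNIV. (id q, id p) \<in> alpha \<and> id q \<noteq> id p}. tree_set q))"
    using A_diff_comb code_less.parity_differs_D
    unfolding alpha_def dbl_rel_R diff_comb_def below_union_def by simp
  then have "A \<in> Dalpha Ob alpha"
    unfolding Dalpha_def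
    by (intro CollectI exI[of _ alpha] exI[of _ UNIV] exI[of _ id] exI[of _ tree_set])
      (use WO FA cr id_iso[of alpha] odd computable_odd X in simp)
  moreover have "computable_ordinal alpha"
    unfolding computable_ordinal_def using WO cr ordIso_reflexive[OF WO] by blast
  ultimately show ?thesis unfolding Dunion_def using FA by blast
qed

end

theorem FG_Dunion:
  fixes Ob :: "nat \<Rightarrow> 'a::topological_space set"
  assumes eas: "effective_approximation_space Ob ll" and A: "A \<in> Fsigma Ob \<inter> Gdelta Ob"
  shows "A \<in> Dunion Ob"
proof -
  have basis: "topological_basis (range Ob)" and ar: "approximation_relation (range Ob) ll"
    and ce: "ce_rel {(i, j). ll (Ob i) (Ob j)}" using eas unfolding effective_approximation_space_def by auto
  obtain U where U: "unif_Sigma01 Ob U" "A = (\<Inter>n. U n)" using A unfolding Gdelta_def by blast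
  obtain V where V: "unif_Sigma01 Ob V" "- A = (\<Inter>n. V n)" using A unfolding Fsigma_def Gdelta_def by blast
  obtain RU where dec_U: "decidable 3 (\<lambda>zs. RU (zs ! 0) (zs ! 1) (zs ! 2))"
    and RU: "\<And>n. U n = (\<Union>i\<in>{i. \<exists>t. RU t n i}. Ob i)"
    by (rule unif_elim[OF U(1)]) (rule that)
  obtain RV where dec_V: "decidable 3 (\<lambda>zs. RV (zs ! 0) (zs ! 1) (zs ! 2))"
    and RV: "\<And>n. V n = (\<Union>i\<in>{i. \<exists>t. RV t n i}. Ob i)"
    by (rule unif_elim[OF V(1)]) (rule that)
  obtain RL where dec_L: "decidable 3 (\<lambda>zs. RL (zs ! 0) (zs ! 1) (zs ! 2))"
    and RL: "{(i, j). ll (Ob i) (Ob j)} = {(a, b). \<exists>t. RL t a b}"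
    using ce_rel_elim[OF ce] by blast
  have "ll (Ob i) (Ob j) \<longleftrightarrow> (\<exists>t. RL t i j)" for i j
    using RL by (simp add: set_eq_iff)
  then interpret effective_delta_tree Ob ll RU RV RL U V A
    by unfold_locales (use basis ar RU RV U(2) V(2) dec_U dec_V dec_L in auto)
  show ?thesis by (rule A_Dunion)
qed

theorem theorem5p16:
  fixes Ob :: "nat \<Rightarrow> 'a::topological_space set"
    and ll :: "'a set \<Rightarrow> 'a set \<Rightarrow> bool"
  assumes "effective_approximation_space Ob ll"
  shows "Fsigma Ob \<inter> Gdelta Ob \<subseteq> Dunion Ob \<and> Dunion Ob \<subseteq> Delta02 Ob \<and>
         (Fsigma Ob \<inter> Gdelta Ob = Delta02 Ob \<longrightarrow> Dunion Ob = Delta02 Ob)"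
proof -
  have first: "Fsigma Ob \<inter> Gdelta Ob \<subseteq> Dunion Ob"
    using FG_Dunion[OF assms] by blast
  have second: "Dunion Ob \<subseteq> Delta02 Ob"
    using Dunion_Delta02 assms unfolding effective_approximation_space_def by blast
  show ?thesis using first second by blast
qed

end
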